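(* Let $0\le\rho<1$, $0<\delta<1$, integers $n>0$, $m>1$, and let $\psi_{AB}$ be an $m$-dimensional noisy maximally entangled state with maximal correlation $\rho=\rho(\psi_{AB})$. Then there exist $d=d(\rho,\delta)$ and a map $f:\mathcal{H}_m^{\otimes n}\to\mathcal{H}_m^{\otimes n}$ such that for all $P,Q\in\mathcal{H}_m^{\otimes n}$ with $0\le P\le\mathrm{id}$ and $0\le Q\le\mathrm{id}$, the operators $P^{(1)}=f(P)$, $Q^{(1)}=f(Q)$ satisfy: (1) $0\le P^{(1)}\le\mathrm{id}$ and $0\le Q^{(1)}\le\mathrm{id}$; (2) $\|P^{(1)}\|'_2\le\|P\|'_2$ and $\|Q^{(1)}\|'_2\le\|Q\|'_2$; (3) $|\mathrm{Tr}((P^{(1)}\otimes Q^{(1)})\psi_{AB}^{\otimes n})-\mathrm{Tr}((P\otimes Q)\psi_{AB}^{\otimes n})|\le\delta$; (4) $\|(P^{(1)})^{>d}\|'^2_2\le\delta$ and $\|(Q^{(1)})^{>d}\|'^2_2\le\delta$; (5) $f$ is linear and unital. In particular one can take $d=\frac{2\log^2(1/\delta)}{C(1-\rho)\delta}$ for some constant $C$.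
   Context: For $X\in\mathcal{M}_m^{\otimes n}$ (complex operators on $(\mathbb{C}^m)^{\otimes n}$), $\|X\|'_2=(\frac1{m^n}\mathrm{Tr}X^\dagger X)^{1/2}$. A standard orthonormal basis of $\mathcal{M}_m$ is an orthonormal basis (w.r.t. $\frac1m\mathrm{Tr}X^\dagger Y$) of Hermitian matrices $\mathcal{B}_0=\mathrm{id}_m,\ldots,\mathcal{B}_{m^2-1}$; for $\sigma\in\{0,\ldots,m^2-1\}^n$, $\mathcal{B}_\sigma=\bigotimes_i\mathcal{B}_{\sigma_i}$, $|\sigma|=|\{i:\sigma_i\ne0\}|$, and $X=\sum_\sigma\widehat X(\sigma)\mathcal{B}_\sigma$. Then $X^{>d}=\sum_{|\sigma|>d}\widehat X(\sigma)\mathcal{B}_\sigma$, which is independent of the basis. A noisy maximally entangled state is a state $\psi_{AB}$ on $\mathbb{C}^m\otimes\mathbb{C}^m$ with $\psi_A=\psi_B=\mathrm{id}_m/m$ and maximal correlation $\rho(\psi_{AB})=\sup\{|\mathrm{Tr}((P^\dagger\otimes Q)\psi_{AB})|:\mathrm{Tr}P=\mathrm{Tr}Q=0,\ \tfrac1m\mathrm{Tr}P^\dagger P=\tfrac1m\mathrm{Tr}Q^\dagger Q=1\}<1$. *)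

theory Defs
  imports Complex_Main
begin

text \<open>Operators on (C^m)^{\<otimes> n} are represented as functions
  nat list \<Rightarrow> nat list \<Rightarrow> complex, where a basis index is a list of length n
  with entries below m; entries outside this index set are required to be 0.
  Operators on C^m \<otimes> C^m are functions (nat \<times> nat) \<Rightarrow> (nat \<times> nat) \<Rightarrow> complex.\<close>

definition idx :: "nat \<Rightarrow> nat \<Rightarrow> nat list set" where
  "idx m n = {xs. length xs = n \<and> (\<forall>x\<in>set xs. x < m)}"

definition ext_on :: "'a set \<Rightarrow> ('a \<Rightarrow> 'a \<Rightarrow> complex) \<Rightarrow> bool" where
  "ext_on S X \<longleftrightarrow> (\<forall>i j. (i \<notin> S \<or> j \<notin> S) \<longrightarrow> X i j = 0)"

definition herm_on :: "'a set \<Rightarrow> ('a \<Rightarrow> 'a \<Rightarrow> complex) \<Rightarrow> bool" where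
  "herm_on S X \<longleftrightarrow> ext_on S X \<and> (\<forall>i\<in>S. \<forall>j\<in>S. X i j = cnj (X j i))"

definition psd_on :: "'a set \<Rightarrow> ('a \<Rightarrow> 'a \<Rightarrow> complex) \<Rightarrow> bool" where
  "psd_on S X \<longleftrightarrow> herm_on S X \<and>
     (\<forall>v :: 'a \<Rightarrow> complex. 0 \<le> Re (\<Sum>i\<in>S. \<Sum>j\<in>S. cnj (v i) * X i j * v j))"

definition id_on :: "'a set \<Rightarrow> 'a \<Rightarrow> 'a \<Rightarrow> complex" where
  "id_on S i j = (if i = j \<and> i \<in> S then 1 else 0)"

definition between01 :: "'a set \<Rightarrow> ('a \<Rightarrow> 'a \<Rightarrow> complex) \<Rightarrow> bool" where
  "between01 S P \<longleftrightarrow> psd_on S P \<and> psd_on S (\<lambda>i j. id_on S i j - P i j)"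

definition norm2' :: "nat \<Rightarrow> nat \<Rightarrow> (nat list \<Rightarrow> nat list \<Rightarrow> complex) \<Rightarrow> real" where
  "norm2' m n X = sqrt ((1 / real m ^ n) * (\<Sum>i\<in>idx m n. \<Sum>j\<in>idx m n. (cmod (X i j))\<^sup>2))"

text \<open>Tr((P \<otimes> Q) \<psi>^{\<otimes> n}), with the A-systems grouped together and the B-systems grouped together.\<close>
definition corr :: "nat \<Rightarrow> nat \<Rightarrow> ((nat \<times> nat) \<Rightarrow> (nat \<times> nat) \<Rightarrow> complex)
    \<Rightarrow> (nat list \<Rightarrow> nat list \<Rightarrow> complex) \<Rightarrow> (nat list \<Rightarrow> nat list \<Rightarrow> complex) \<Rightarrow> complex" where
  "corr m n \<psi> P Q = (\<Sum>a\<in>idx m n. \<Sum>a'\<in>idx m n. \<Sum>b\<in>idx m n. \<Sum>b'\<in>idx m n.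
      P a a' * Q b b' * (\<Prod>k<n. \<psi> (a' ! k, b' ! k) (a ! k, b ! k)))"

definition pair_idx :: "nat \<Rightarrow> (nat \<times> nat) set" where
  "pair_idx m = {..<m} \<times> {..<m}"

definition ptrace_A :: "nat \<Rightarrow> ((nat \<times> nat) \<Rightarrow> (nat \<times> nat) \<Rightarrow> complex) \<Rightarrow> nat \<Rightarrow> nat \<Rightarrow> complex" where
  "ptrace_A m \<psi> a a' = (\<Sum>b<m. \<psi> (a, b) (a', b))"

definition ptrace_B :: "nat \<Rightarrow> ((nat \<times> nat) \<Rightarrow> (nat \<times> nat) \<Rightarrow> complex) \<Rightarrow> nat \<Rightarrow> nat \<Rightarrow> complex" where
  "ptrace_B m \<psi> b b' = (\<Sum>a<m. \<psi> (a, b) (a, b'))"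

text \<open>|Tr((P^\<dagger> \<otimes> Q) \<psi>)|\<close>
definition corr1 :: "nat \<Rightarrow> ((nat \<times> nat) \<Rightarrow> (nat \<times> nat) \<Rightarrow> complex)
    \<Rightarrow> (nat \<Rightarrow> nat \<Rightarrow> complex) \<Rightarrow> (nat \<Rightarrow> nat \<Rightarrow> complex) \<Rightarrow> complex" where
  "corr1 m \<psi> P Q = (\<Sum>a<m. \<Sum>a'<m. \<Sum>b<m. \<Sum>b'<m.
      cnj (P a' a) * Q b b' * \<psi> (a', b') (a, b))"

definition maxcorr :: "nat \<Rightarrow> ((nat \<times> nat) \<Rightarrow> (nat \<times> nat) \<Rightarrow> complex) \<Rightarrow> real" where
  "maxcorr m \<psi> = Sup {cmod (corr1 m \<psi> P Q) | P Q.
      ext_on {..<m} P \<and> ext_on {..<m} Q \<and>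
      (\<Sum>i<m. P i i) = 0 \<and> (\<Sum>i<m. Q i i) = 0 \<and>
      (1 / real m) * (\<Sum>i<m. \<Sum>j<m. (cmod (P i j))\<^sup>2) = 1 \<and>
      (1 / real m) * (\<Sum>i<m. \<Sum>j<m. (cmod (Q i j))\<^sup>2) = 1}"

definition nme_state :: "nat \<Rightarrow> ((nat \<times> nat) \<Rightarrow> (nat \<times> nat) \<Rightarrow> complex) \<Rightarrow> bool" where
  "nme_state m \<psi> \<longleftrightarrow> psd_on (pair_idx m) \<psi> \<and>
     (\<Sum>x\<in>pair_idx m. \<psi> x x) = 1 \<and>
     (\<forall>a<m. \<forall>a'<m. ptrace_A m \<psi> a a' = id_on {..<m} a a' / of_nat m) \<and>
     (\<forall>b<m. \<forall>b'<m. ptrace_B m \<psi> b b' = id_on {..<m} b b' / of_nat m) \<and>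
     maxcorr m \<psi> < 1"

definition std_onb :: "nat \<Rightarrow> (nat \<Rightarrow> nat \<Rightarrow> nat \<Rightarrow> complex) \<Rightarrow> bool" where
  "std_onb m B \<longleftrightarrow> B 0 = id_on {..<m} \<and>
     (\<forall>k<m\<^sup>2. herm_on {..<m} (B k)) \<and>
     (\<forall>k<m\<^sup>2. \<forall>l<m\<^sup>2. (1 / of_nat m) * (\<Sum>i<m. \<Sum>j<m. cnj (B k i j) * B l i j)
                         = (if k = l then 1 else 0))"

definition basis_tensor :: "nat \<Rightarrow> (nat \<Rightarrow> nat \<Rightarrow> nat \<Rightarrow> complex) \<Rightarrow> nat list
    \<Rightarrow> nat list \<Rightarrow> nat list \<Rightarrow> complex" where
  "basis_tensor n B \<sigma> i j = (\<Prod>k<n. B (\<sigma> ! k) (i ! k) (j ! k))"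

definition weight :: "nat list \<Rightarrow> nat" where
  "weight \<sigma> = length (filter (\<lambda>s. s \<noteq> 0) \<sigma>)"

definition fcoeff :: "nat \<Rightarrow> nat \<Rightarrow> (nat \<Rightarrow> nat \<Rightarrow> nat \<Rightarrow> complex)
    \<Rightarrow> (nat list \<Rightarrow> nat list \<Rightarrow> complex) \<Rightarrow> nat list \<Rightarrow> complex" where
  "fcoeff m n B X \<sigma> = (1 / of_nat m ^ n) *
     (\<Sum>i\<in>idx m n. \<Sum>j\<in>idx m n. cnj (basis_tensor n B \<sigma> i j) * X i j)"

definition high_part :: "nat \<Rightarrow> nat \<Rightarrow> (nat \<Rightarrow> nat \<Rightarrow> nat \<Rightarrow> complex) \<Rightarrow> real
    \<Rightarrow> (nat list \<Rightarrow> nat list \<Rightarrow> complex) \<Rightarrow> nat list \<Rightarrow> nat list \<Rightarrow> complex" where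
  "high_part m n B d X i j =
     (\<Sum>\<sigma>\<in>{\<sigma>\<in>idx (m\<^sup>2) n. real (weight \<sigma>) > d}. fcoeff m n B X \<sigma> * basis_tensor n B \<sigma> i j)"

definition linear_unital :: "nat \<Rightarrow> nat \<Rightarrow>
    ((nat list \<Rightarrow> nat list \<Rightarrow> complex) \<Rightarrow> (nat list \<Rightarrow> nat list \<Rightarrow> complex)) \<Rightarrow> bool" where
  "linear_unital m n f \<longleftrightarrow>
     (\<forall>X. herm_on (idx m n) X \<longrightarrow> herm_on (idx m n) (f X)) \<and>
     (\<forall>X Y (a::real) (b::real). herm_on (idx m n) X \<longrightarrow> herm_on (idx m n) Y \<longrightarrow>
        f (\<lambda>i j. of_real a * X i j + of_real b * Y i j)
          = (\<lambda>i j. of_real a * f X i j + of_real b * f Y i j)) \<and>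
     f (id_on (idx m n)) = id_on (idx m n)"

end

(* The map f is the noise operator T_g, the tensor product over the sites of
   X |-> g X + (1 - g) (tr_k X (x) id/m), i.e. partial depolarisation of every factor.
   It is unital, positivity preserving and contracts the 2-norm, which gives (1), (2)
   and (5); it multiplies the Fourier coefficient of B_sigma by g^|sigma|, so by Bessel's
   inequality the part of degree > d of T_g P has squared norm at most g^(2d) ||P||^2,
   which gives (4).
   For (3) write psi = id/m^2 + psi' and expand Tr((X (x) Y) psi^(x)n) according to the
   number k of factors psi'. Since both marginals of psi are id/m, psi' only sees the
   traceless part of each factor, so maximal correlation bounds the level-k term by
   rho^k ||X|| ||Y||, and applying T_g to X and Y multiplies it by g^(2k). The correlation
   therefore moves by at most max_k (1 - g^(2k)) rho^k. With 1 - g^2 = delta (1 - rho) / ln(1/delta)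
   both this and g^(2d) are at most delta for d = 2 ln(1/delta)^2 / ((1 - rho) delta),
   so C = 1 works. *)

theory Submission
  imports Defs "HOL-Analysis.L2_Norm"
begin

lemma sum_sqrt_mult_le:
  fixes a b :: "'a \<Rightarrow> real"
  assumes "\<And>i. i \<in> I \<Longrightarrow> 0 \<le> a i" "\<And>i. i \<in> I \<Longrightarrow> 0 \<le> b i"
  shows "(\<Sum>i\<in>I. sqrt (a i) * sqrt (b i)) \<le> sqrt (\<Sum>i\<in>I. a i) * sqrt (\<Sum>i\<in>I. b i)"
  using L2_set_mult_ineq[of "\<lambda>i. sqrt (a i)" "\<lambda>i. sqrt (b i)" I] assms
  by (simp add: L2_set_def cong: sum.cong)

lemma sqrt_mult_add_le:
  fixes a b c d :: real
  assumes "0 \<le> a" "0 \<le> b" "0 \<le> c" "0 \<le> d"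
  shows "sqrt a * sqrt b + sqrt c * sqrt d \<le> sqrt (a + c) * sqrt (b + d)"
  using sum_sqrt_mult_le[of UNIV "\<lambda>x. if x then a else c" "\<lambda>x. if x then b else d"] assms
  by (simp add: UNIV_bool add.commute)

lemma cmod_sum_sq_le: "(cmod (\<Sum>u\<in>A. x u))\<^sup>2 \<le> real (card A) * (\<Sum>u\<in>A. (cmod (x u))\<^sup>2)"
proof -
  have "cmod (\<Sum>u\<in>A. x u) \<le> (\<Sum>u\<in>A. \<bar>cmod (x u)\<bar> * \<bar>1\<bar>)"
    by (simp add: norm_sum)
  also have "\<dots> \<le> L2_set (\<lambda>u. cmod (x u)) A * L2_set (\<lambda>_. 1) A"
    by (rule L2_set_mult_ineq)
  finally have "(cmod (\<Sum>u\<in>A. x u))\<^sup>2 \<le> (L2_set (\<lambda>u. cmod (x u)) A * L2_set (\<lambda>_. 1) A)\<^sup>2"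
    by (intro power_mono) auto
  then show ?thesis
    by (simp add: L2_set_def power_mult_distrib sum_nonneg mult.commute)
qed

lemma idx_0: "idx m 0 = {[]}"
  by (auto simp: idx_def)

lemma idx_Suc: "idx m (Suc n) = (\<lambda>(a, xs). a # xs) ` ({..<m} \<times> idx m n)"
  by (auto simp: idx_def image_iff length_Suc_conv)

lemma finite_idx [simp]: "finite (idx m n)"
  by (induction n) (auto simp: idx_0 idx_Suc)

lemma card_idx: "card (idx m n) = m ^ n"
  by (induction n) (auto simp: idx_0 idx_Suc card_image inj_on_def card_cartesian_product)

lemma Cons_in_idx_Suc [simp]: "a # xs \<in> idx m (Suc n) \<longleftrightarrow> a < m \<and> xs \<in> idx m n"
  by (auto simp: idx_def)

lemma idx_iff: "i \<in> idx m n \<longleftrightarrow> length i = n \<and> (\<forall>l<n. i ! l < m)"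
  by (auto simp: idx_def all_set_conv_all_nth)

lemma idx_length: "i \<in> idx m n \<Longrightarrow> length i = n"
  by (simp add: idx_def)

lemma idx_nth: "i \<in> idx m n \<Longrightarrow> k < n \<Longrightarrow> i ! k < m"
  by (simp add: idx_def)

lemma list_update_in_idx_iff:
  "length i = n \<Longrightarrow> k < n \<Longrightarrow> u < m \<Longrightarrow> i ! k < m \<Longrightarrow> i[k := u] \<in> idx m n \<longleftrightarrow> i \<in> idx m n"
  by (auto simp: idx_iff nth_list_update)

lemma list_update_in_idx: "i \<in> idx m n \<Longrightarrow> k < n \<Longrightarrow> u < m \<Longrightarrow> i[k := u] \<in> idx m n"
  by (auto simp: idx_iff nth_list_update)

lemma list_update_notin_idx: "i \<notin> idx m n \<Longrightarrow> k < n \<Longrightarrow> i ! k < m \<Longrightarrow> u < m \<Longrightarrow> i[k := u] \<notin> idx m n"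
  by (cases "length i = n") (auto simp: list_update_in_idx_iff dest: idx_length)

lemma sum_idx_Suc: "(\<Sum>i\<in>idx m (Suc n). g i) = (\<Sum>a<m. \<Sum>xs\<in>idx m n. g (a # xs))"
  unfolding idx_Suc
  by (subst sum.reindex) (auto simp: inj_on_def sum.cartesian_product split_beta)

lemma sum_idx_prod:
  fixes f :: "nat \<Rightarrow> nat \<Rightarrow> 'a::comm_semiring_1"
  shows "(\<Sum>i\<in>idx m n. \<Prod>k<n. f k (i ! k)) = (\<Prod>k<n. \<Sum>u<m. f k u)"
proof (induction n arbitrary: f)
  case 0
  then show ?case by (simp add: idx_0)
next
  case (Suc n)
  have "(\<Sum>i\<in>idx m (Suc n). \<Prod>k<Suc n. f k (i ! k))
      = (\<Sum>a<m. f 0 a) * (\<Sum>xs\<in>idx m n. \<Prod>k<n. f (Suc k) (xs ! k))"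
    by (simp only: sum_idx_Suc prod.lessThan_Suc_shift nth_Cons_0 nth_Cons_Suc sum_product)
  also have "\<dots> = (\<Prod>k<Suc n. \<Sum>u<m. f k u)"
    using Suc[of "\<lambda>k. f (Suc k)"] by (simp only: prod.lessThan_Suc_shift)
  finally show ?case .
qed

lemma sum_idx_idx_prod:
  fixes g :: "nat \<Rightarrow> nat \<Rightarrow> nat \<Rightarrow> 'a::comm_semiring_1"
  shows "(\<Sum>i\<in>idx m n. \<Sum>j\<in>idx m n. \<Prod>k<n. g k (i ! k) (j ! k)) = (\<Prod>k<n. \<Sum>u<m. \<Sum>v<m. g k u v)"
proof -
  have "(\<Sum>i\<in>idx m n. \<Sum>j\<in>idx m n. \<Prod>k<n. g k (i ! k) (j ! k))
      = (\<Sum>i\<in>idx m n. \<Prod>k<n. \<Sum>v<m. g k (i ! k) v)"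
    by (intro sum.cong refl) (rule sum_idx_prod)
  also have "\<dots> = (\<Prod>k<n. \<Sum>u<m. \<Sum>v<m. g k u v)"
    by (rule sum_idx_prod)
  finally show ?thesis .
qed

definition idx_zero_at :: "nat \<Rightarrow> nat \<Rightarrow> nat \<Rightarrow> nat list set" where
  "idx_zero_at m n k = {i \<in> idx m n. i ! k = 0}"

lemma finite_idx_zero_at [simp]: "finite (idx_zero_at m n k)"
  by (simp add: idx_zero_at_def)

lemma idx_zero_at_length: "i \<in> idx_zero_at m n k \<Longrightarrow> length i = n"
  by (simp add: idx_zero_at_def idx_def)

lemma idx_eq_image_update:
  assumes "k < n" "0 < m"
  shows "idx m n = (\<lambda>(c, i). i[k := c]) ` ({..<m} \<times> idx_zero_at m n k)"
proof
  show "idx m n \<subseteq> (\<lambda>(c, i). i[k := c]) ` ({..<m} \<times> idx_zero_at m n k)"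
  proof
    fix x assume x: "x \<in> idx m n"
    then have "x = x[k := 0, k := x ! k]" "x[k := 0] \<in> idx_zero_at m n k" "x ! k < m"
      using assms by (auto simp: idx_zero_at_def idx_length list_update_in_idx idx_nth)
    then show "x \<in> (\<lambda>(c, i). i[k := c]) ` ({..<m} \<times> idx_zero_at m n k)"
      by (intro image_eqI[of _ _ "(x ! k, x[k := 0])"]) auto
  qed
qed (use assms list_update_in_idx in \<open>auto simp: idx_zero_at_def\<close>)

lemma inj_on_update_idx_zero_at:
  assumes "k < n"
  shows "inj_on (\<lambda>(c, i). i[k := c]) ({..<m} \<times> idx_zero_at m n k)"
proof (intro inj_onI, clarify)
  fix c i c' i'
  assume i: "i \<in> idx_zero_at m n k" and i': "i' \<in> idx_zero_at m n k" and e: "i[k := c] = i'[k := c']"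
  have "length i = n" "length i' = n" "i ! k = 0" "i' ! k = 0"
    using i i' by (auto simp: idx_zero_at_def idx_length)
  moreover from this have "c = c'"
    using arg_cong[OF e, of "\<lambda>x. x ! k"] assms by simp
  ultimately show "c = c' \<and> i = i'"
    using arg_cong[OF e, of "\<lambda>x. x[k := 0]"] by (metis list_update_id list_update_overwrite)
qed

lemma sum_idx_site:
  assumes "k < n" "0 < m"
  shows "(\<Sum>i\<in>idx m n. g i) = (\<Sum>c<m. \<Sum>i\<in>idx_zero_at m n k. g (i[k := c]))"
  by (subst idx_eq_image_update[OF assms], subst sum.reindex[OF inj_on_update_idx_zero_at[OF assms(1)]])
     (simp add: sum.cartesian_product split_beta)

lemma sum_idx_idx_site:
  assumes "k < n" "0 < m"
  shows "(\<Sum>i\<in>idx m n. \<Sum>j\<in>idx m n. F i j) =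
    (\<Sum>i\<in>idx_zero_at m n k. \<Sum>j\<in>idx_zero_at m n k. \<Sum>c<m. \<Sum>c'<m. F (i[k := c]) (j[k := c']))"
  by (simp add: sum_idx_site[OF assms] sum.swap[of _ "{..<m}" "idx_zero_at m n k"])

section \<open>Expansion of the correlation over the sites\<close>

type_synonym tensor_op = "nat list \<Rightarrow> nat list \<Rightarrow> complex"
type_synonym pair_op = "nat \<times> nat \<Rightarrow> nat \<times> nat \<Rightarrow> complex"

definition block :: "tensor_op \<Rightarrow> nat \<Rightarrow> nat \<Rightarrow> tensor_op" where
  "block X a a' = (\<lambda>xs ys. X (a # xs) (a' # ys))"

definition ptrace1 :: "nat \<Rightarrow> tensor_op \<Rightarrow> tensor_op" where
  "ptrace1 m X = (\<lambda>xs ys. \<Sum>u<m. X (u # xs) (u # ys))"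

definition hs_sq :: "nat \<Rightarrow> nat \<Rightarrow> tensor_op \<Rightarrow> real" where
  "hs_sq m n X = (\<Sum>i\<in>idx m n. \<Sum>j\<in>idx m n. (cmod (X i j))\<^sup>2)"

definition centered_state :: "nat \<Rightarrow> pair_op \<Rightarrow> pair_op" where
  "centered_state m \<psi> x y = \<psi> x y - (if x = y then 1 / (of_nat m)\<^sup>2 else 0)"

definition uniform_marginals :: "nat \<Rightarrow> pair_op \<Rightarrow> bool" where
  "uniform_marginals m \<psi> \<longleftrightarrow>
     (\<forall>a<m. \<forall>a'<m. ptrace_A m \<psi> a a' = id_on {..<m} a a' / of_nat m) \<and>
     (\<forall>b<m. \<forall>b'<m. ptrace_B m \<psi> b b' = id_on {..<m} b b' / of_nat m)"

definition site_contract :: "nat \<Rightarrow> pair_op \<Rightarrow> (tensor_op \<Rightarrow> tensor_op \<Rightarrow> complex)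
    \<Rightarrow> (nat \<Rightarrow> nat \<Rightarrow> tensor_op) \<Rightarrow> (nat \<Rightarrow> nat \<Rightarrow> tensor_op) \<Rightarrow> complex" where
  "site_contract m \<phi> \<beta> U V =
     (\<Sum>a<m. \<Sum>a'<m. \<Sum>b<m. \<Sum>b'<m. \<phi> (a', b') (a, b) * \<beta> (U a a') (V b b'))"

text \<open>Writing \<open>\<psi> = id/m\<^sup>2 + \<psi>'\<close>, the weight \<open>h k\<close> multiplies the terms of the expansion of
  \<open>Tr((X \<otimes> Y) \<psi>\<^sup>\<otimes>\<^sup>n)\<close> that contain exactly \<open>k\<close> factors \<open>\<psi>'\<close>.\<close>
fun level_form :: "nat \<Rightarrow> pair_op \<Rightarrow> nat \<Rightarrow> (nat \<Rightarrow> real) \<Rightarrow> tensor_op \<Rightarrow> tensor_op \<Rightarrow> complex" where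
  "level_form m \<psi> 0 h X Y = of_real (h 0) * X [] [] * Y [] []"
| "level_form m \<psi> (Suc n) h X Y =
     level_form m \<psi> n h (ptrace1 m X) (ptrace1 m Y) / (of_nat m)\<^sup>2 +
     site_contract m (centered_state m \<psi>) (level_form m \<psi> n (\<lambda>k. h (Suc k))) (block X) (block Y)"

definition op_bilinear :: "(tensor_op \<Rightarrow> tensor_op \<Rightarrow> complex) \<Rightarrow> bool" where
  "op_bilinear \<beta> \<longleftrightarrow>
     (\<forall>X X' Y c. \<beta> (\<lambda>i j. c * X i j + X' i j) Y = c * \<beta> X Y + \<beta> X' Y) \<and>
     (\<forall>X Y Y' c. \<beta> X (\<lambda>i j. c * Y i j + Y' i j) = c * \<beta> X Y + \<beta> X Y')"

context
  fixes \<beta> :: "tensor_op \<Rightarrow> tensor_op \<Rightarrow> complex"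
  assumes \<beta>: "op_bilinear \<beta>"
begin

lemma op_bilinear_left: "\<beta> (\<lambda>i j. c * X i j + X' i j) Y = c * \<beta> X Y + \<beta> X' Y"
  using \<beta> by (simp add: op_bilinear_def)

lemma op_bilinear_right: "\<beta> X (\<lambda>i j. c * Y i j + Y' i j) = c * \<beta> X Y + \<beta> X Y'"
  using \<beta> by (simp add: op_bilinear_def)

lemma op_bilinear_add_left: "\<beta> (\<lambda>i j. X i j + X' i j) Y = \<beta> X Y + \<beta> X' Y"
  using op_bilinear_left[of 1 X X' Y] by simp

lemma op_bilinear_add_right: "\<beta> X (\<lambda>i j. Y i j + Y' i j) = \<beta> X Y + \<beta> X Y'"
  using op_bilinear_right[of X 1 Y Y'] by simp

lemma op_bilinear_zero_left: "\<beta> (\<lambda>i j. 0) Y = 0"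
  using op_bilinear_left[of "-1" "\<lambda>i j. 0" "\<lambda>i j. 0" Y] by simp

lemma op_bilinear_zero_right: "\<beta> X (\<lambda>i j. 0) = 0"
  using op_bilinear_right[of X "-1" "\<lambda>i j. 0" "\<lambda>i j. 0"] by simp

lemma op_bilinear_scale_left: "\<beta> (\<lambda>i j. c * X i j) Y = c * \<beta> X Y"
  using op_bilinear_left[of c X "\<lambda>i j. 0" Y] op_bilinear_zero_left[of Y] by simp

lemma op_bilinear_scale_right: "\<beta> X (\<lambda>i j. c * Y i j) = c * \<beta> X Y"
  using op_bilinear_right[of X c Y "\<lambda>i j. 0"] op_bilinear_zero_right[of X] by simp

lemma op_bilinear_sum_left: "finite U \<Longrightarrow> \<beta> (\<lambda>i j. \<Sum>u\<in>U. F u i j) Y = (\<Sum>u\<in>U. \<beta> (F u) Y)"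
  by (induction U rule: finite_induct) (simp_all add: op_bilinear_zero_left op_bilinear_add_left)

lemma op_bilinear_sum_right: "finite U \<Longrightarrow> \<beta> X (\<lambda>i j. \<Sum>u\<in>U. F u i j) = (\<Sum>u\<in>U. \<beta> X (F u))"
  by (induction U rule: finite_induct) (simp_all add: op_bilinear_zero_right op_bilinear_add_right)

end

lemma ptrace1_linear: "ptrace1 m (\<lambda>i j. c * X i j + X' i j) = (\<lambda>i j. c * ptrace1 m X i j + ptrace1 m X' i j)"
  by (simp add: ptrace1_def sum.distrib sum_distrib_left)

lemma block_linear: "block (\<lambda>i j. c * X i j + X' i j) a a' = (\<lambda>i j. c * block X a a' i j + block X' a a' i j)"
  by (simp add: block_def)

lemma ptrace1_eq_sum_block: "ptrace1 m X = (\<lambda>i j. \<Sum>a<m. block X a a i j)"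
  by (simp add: ptrace1_def block_def)

lemma site_contract_scale: "site_contract m \<phi> (\<lambda>X Y. c * \<beta> X Y) U V = c * site_contract m \<phi> \<beta> U V"
  by (simp add: site_contract_def sum_distrib_left mult.left_commute)

lemma level_form_linear_left:
  "level_form m \<psi> n h (\<lambda>i j. c * X i j + X' i j) Y = c * level_form m \<psi> n h X Y + level_form m \<psi> n h X' Y"
proof (induction n arbitrary: h X X' Y)
  case (Suc n)
  show ?case
    by (simp only: level_form.simps ptrace1_linear block_linear Suc site_contract_def)
       (simp add: algebra_simps sum.distrib sum_distrib_left add_divide_distrib)
qed (simp add: algebra_simps)

lemma level_form_linear_right:
  "level_form m \<psi> n h X (\<lambda>i j. c * Y i j + Y' i j) = c * level_form m \<psi> n h X Y + level_form m \<psi> n h X Y'"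
proof (induction n arbitrary: h X Y Y')
  case (Suc n)
  show ?case
    by (simp only: level_form.simps ptrace1_linear block_linear Suc site_contract_def)
       (simp add: algebra_simps sum.distrib sum_distrib_left add_divide_distrib)
qed (simp add: algebra_simps)

lemma op_bilinear_level_form: "op_bilinear (level_form m \<psi> n h)"
  by (simp add: op_bilinear_def level_form_linear_left level_form_linear_right)

lemma level_form_weight_linear:
  "level_form m \<psi> n (\<lambda>k. c * h1 k + h2 k) X Y = of_real c * level_form m \<psi> n h1 X Y + level_form m \<psi> n h2 X Y"
proof (induction n arbitrary: h1 h2 X Y)
  case (Suc n)
  show ?case
    by (simp only: level_form.simps Suc site_contract_def)
       (simp add: algebra_simps sum.distrib sum_distrib_left add_divide_distrib)
qed (simp add: algebra_simps)

lemma level_form_weight_scale: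
  "level_form m \<psi> n (\<lambda>k. c * h k) X Y = of_real c * level_form m \<psi> n h X Y"
proof (induction n arbitrary: h X Y)
  case (Suc n)
  show ?case
    by (simp only: level_form.simps Suc site_contract_def)
       (simp add: algebra_simps sum_distrib_left add_divide_distrib)
qed simp

lemma op_bilinear_corr: "op_bilinear (corr m n \<psi>)"
  unfolding op_bilinear_def corr_def
  by (simp add: algebra_simps sum.distrib sum_distrib_left)

lemma corr_Suc: "corr m (Suc n) \<psi> X Y = site_contract m \<psi> (corr m n \<psi>) (block X) (block Y)"
  unfolding corr_def block_def site_contract_def
  by (simp only: sum_idx_Suc prod.lessThan_Suc_shift nth_Cons_0 nth_Cons_Suc)
     (simp add: sum_distrib_left sum.swap[of _ "idx m n" "{..<m}"] ac_simps)

lemma centered_ptrace_first: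
  assumes "uniform_marginals m \<psi>" "b < m" "b' < m" "0 < m"
  shows "(\<Sum>a<m. centered_state m \<psi> (a, b') (a, b)) = 0"
proof -
  have "(\<Sum>a<m. \<psi> (a, b') (a, b)) = id_on {..<m} b' b / of_nat m"
    using assms(1-3) unfolding uniform_marginals_def ptrace_B_def by auto
  then show ?thesis
    using assms(2-4) by (simp add: centered_state_def sum_subtractf id_on_def power2_eq_square)
qed

lemma centered_ptrace_second:
  assumes "uniform_marginals m \<psi>" "a < m" "a' < m" "0 < m"
  shows "(\<Sum>b<m. centered_state m \<psi> (a', b) (a, b)) = 0"
proof -
  have "(\<Sum>b<m. \<psi> (a', b) (a, b)) = id_on {..<m} a' a / of_nat m"
    using assms(1-3) unfolding uniform_marginals_def ptrace_A_def by auto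
  then show ?thesis
    using assms(2-4) by (simp add: centered_state_def sum_subtractf id_on_def power2_eq_square)
qed

lemma sum_rotate3: "(\<Sum>a\<in>A. \<Sum>b\<in>B. \<Sum>c\<in>C. f a b c) = (\<Sum>b\<in>B. \<Sum>c\<in>C. \<Sum>a\<in>A. f a b c)"
  by (subst sum.swap) (rule sum.cong[OF refl], rule sum.swap)

lemma sum_mult_if_eq:
  fixes f :: "'a \<Rightarrow> 'b::semiring_0"
  shows "finite A \<Longrightarrow> a \<in> A \<Longrightarrow> (\<Sum>x\<in>A. f x * (if a = x then t else 0)) = f a * t"
  by (simp add: if_distrib[of "\<lambda>x. _ * x"] sum.delta' cong: if_cong)

lemma centered_contract_diag_left:
  assumes "uniform_marginals m \<psi>" "0 < m"
  shows "(\<Sum>a<m. \<Sum>a'<m. \<Sum>b<m. \<Sum>b'<m.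
      centered_state m \<psi> (a', b') (a, b) * (if a = a' then T b b' else 0)) = 0"
proof -
  have "(\<Sum>a<m. \<Sum>a'<m. \<Sum>b<m. \<Sum>b'<m. centered_state m \<psi> (a', b') (a, b) * (if a = a' then T b b' else 0))
      = (\<Sum>a<m. \<Sum>b<m. \<Sum>b'<m. centered_state m \<psi> (a, b') (a, b) * T b b')"
    by (rule sum.cong[OF refl], subst sum_rotate3) (simp add: sum_mult_if_eq)
  also have "\<dots> = (\<Sum>b<m. \<Sum>b'<m. (\<Sum>a<m. centered_state m \<psi> (a, b') (a, b)) * T b b')"
    by (subst sum_rotate3) (simp only: sum_distrib_right)
  finally show ?thesis
    using centered_ptrace_first[OF assms(1) _ _ assms(2)] by simp
qed

lemma centered_contract_diag_right:
  assumes "uniform_marginals m \<psi>" "0 < m"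
  shows "(\<Sum>a<m. \<Sum>a'<m. \<Sum>b<m. \<Sum>b'<m.
      centered_state m \<psi> (a', b') (a, b) * (if b = b' then T a a' else 0)) = 0"
proof -
  have "(\<Sum>a<m. \<Sum>a'<m. \<Sum>b<m. \<Sum>b'<m. centered_state m \<psi> (a', b') (a, b) * (if b = b' then T a a' else 0))
      = (\<Sum>a<m. \<Sum>a'<m. (\<Sum>b<m. centered_state m \<psi> (a', b) (a, b)) * T a a')"
    by (simp add: sum_mult_if_eq sum_distrib_right)
  then show ?thesis
    using centered_ptrace_second[OF assms(1) _ _ assms(2)] by simp
qed

lemma site_contract_identity:
  "site_contract m (\<lambda>x y. if x = y then c else 0) \<beta> F G = c * (\<Sum>a<m. \<Sum>b<m. \<beta> (F a a) (G b b))"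
proof -
  have diag: "(\<Sum>b'<m. (if (a', b') = (a, b) then c else 0) * \<beta> (F a a') (G b b'))
      = (if a' = a then c * \<beta> (F a a) (G b b) else 0)" if "b < m" for a a' b
    using that by (cases "a' = a") (simp_all add: if_distrib[of "\<lambda>x. x * _"] sum.delta cong: if_cong)
  have "site_contract m (\<lambda>x y. if x = y then c else 0) \<beta> F G
      = (\<Sum>a<m. \<Sum>a'<m. \<Sum>b<m. if a' = a then c * \<beta> (F a a) (G b b) else 0)"
    unfolding site_contract_def by (intro sum.cong refl diag) simp
  also have "\<dots> = (\<Sum>a<m. \<Sum>b<m. \<Sum>a'<m. if a' = a then c * \<beta> (F a a) (G b b) else 0)"
    by (rule sum.cong[OF refl], rule sum.swap)
  also have "\<dots> = c * (\<Sum>a<m. \<Sum>b<m. \<beta> (F a a) (G b b))"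
    by (simp add: sum_distrib_left)
  finally show ?thesis .
qed

lemma site_contract_split:
  assumes "op_bilinear \<beta>"
  shows "site_contract m \<psi> \<beta> F G =
    \<beta> (\<lambda>i j. \<Sum>a<m. F a a i j) (\<lambda>i j. \<Sum>b<m. G b b i j) / (of_nat m)\<^sup>2 +
    site_contract m (centered_state m \<psi>) \<beta> F G"
proof -
  have "site_contract m \<psi> \<beta> F G = site_contract m
      (\<lambda>x y. (if x = y then 1 / (of_nat m)\<^sup>2 else 0) + centered_state m \<psi> x y) \<beta> F G"
    by (simp add: centered_state_def)
  also have "\<dots> = site_contract m (\<lambda>x y. if x = y then 1 / (of_nat m)\<^sup>2 else 0) \<beta> F G +
      site_contract m (centered_state m \<psi>) \<beta> F G"
    by (simp add: site_contract_def distrib_right sum.distrib)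
  finally show ?thesis
    by (simp add: site_contract_identity op_bilinear_sum_left[OF assms] op_bilinear_sum_right[OF assms])
qed

text \<open>Since both marginals of \<open>\<psi>\<close> are \<open>id/m\<close>, \<open>\<psi>'\<close> annihilates anything proportional to the identity
  on the first site of either argument.\<close>
lemma centered_contract_add_diag:
  assumes "op_bilinear \<beta>" "uniform_marginals m \<psi>" "0 < m"
  shows "site_contract m (centered_state m \<psi>) \<beta>
      (\<lambda>a a' i j. F a a' i j + (if a = a' then A i j else 0)) (\<lambda>b b' i j. G b b' i j + (if b = b' then B i j else 0))
    = site_contract m (centered_state m \<psi>) \<beta> F G"
proof -
  have expand: "\<beta> (\<lambda>i j. F a a' i j + (if a = a' then A i j else 0)) (\<lambda>i j. G b b' i j + (if b = b' then B i j else 0))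
     = \<beta> (F a a') (G b b') + (if a = a' then \<beta> A (G b b') else 0) + (if b = b' then \<beta> (F a a') B else 0)
       + (if a = a' then if b = b' then \<beta> A B else 0 else 0)" for a a' b b'
    using op_bilinear_add_left[OF assms(1)] op_bilinear_add_right[OF assms(1)]
    by (cases "a = a'"; cases "b = b'") simp_all
  let ?\<psi>' = "centered_state m \<psi>"
  have "site_contract m ?\<psi>' \<beta>
      (\<lambda>a a' i j. F a a' i j + (if a = a' then A i j else 0)) (\<lambda>b b' i j. G b b' i j + (if b = b' then B i j else 0))
    = site_contract m ?\<psi>' \<beta> F G
      + (\<Sum>a<m. \<Sum>a'<m. \<Sum>b<m. \<Sum>b'<m. ?\<psi>' (a', b') (a, b) * (if a = a' then \<beta> A (G b b') else 0))
      + (\<Sum>a<m. \<Sum>a'<m. \<Sum>b<m. \<Sum>b'<m. ?\<psi>' (a', b') (a, b) * (if b = b' then \<beta> (F a a') B else 0))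
      + (\<Sum>a<m. \<Sum>a'<m. \<Sum>b<m. \<Sum>b'<m. ?\<psi>' (a', b') (a, b) * (if a = a' then if b = b' then \<beta> A B else 0 else 0))"
    unfolding site_contract_def expand by (simp only: distrib_left sum.distrib)
  then show ?thesis
    by (simp only: centered_contract_diag_left[OF assms(2,3)] centered_contract_diag_right[OF assms(2,3)]) simp
qed

lemma corr_eq_level_form: "corr m n \<psi> X Y = level_form m \<psi> n (\<lambda>_. 1) X Y"
proof (induction n arbitrary: X Y)
  case 0
  then show ?case by (simp add: corr_def idx_0)
next
  case (Suc n)
  have "corr m n \<psi> = level_form m \<psi> n (\<lambda>_. 1)"
    using Suc by (intro ext)
  then have "corr m (Suc n) \<psi> X Y = site_contract m \<psi> (level_form m \<psi> n (\<lambda>_. 1)) (block X) (block Y)"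
    by (simp add: corr_Suc)
  then show ?case
    by (subst (asm) site_contract_split[OF op_bilinear_level_form]) (simp add: ptrace1_eq_sum_block)
qed

section \<open>Bounding the expansion by the maximal correlation\<close>

definition hs_sq1 :: "nat \<Rightarrow> (nat \<Rightarrow> nat \<Rightarrow> complex) \<Rightarrow> real" where
  "hs_sq1 m u = (\<Sum>a<m. \<Sum>a'<m. (cmod (u a a'))\<^sup>2)"

text \<open>The factor \<open>1/m\<close> converts the unnormalised \<open>hs_sq1\<close> into the normalised norms of \<open>maxcorr\<close>.\<close>
definition centered_corr_bound :: "nat \<Rightarrow> pair_op \<Rightarrow> real \<Rightarrow> bool" where
  "centered_corr_bound m \<psi> \<rho> \<longleftrightarrow> (\<forall>u w. (\<Sum>a<m. u a a) = 0 \<longrightarrow> (\<Sum>b<m. w b b) = 0 \<longrightarrow>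
     cmod (\<Sum>a<m. \<Sum>a'<m. \<Sum>b<m. \<Sum>b'<m. centered_state m \<psi> (a', b') (a, b) * u a a' * w b b')
       \<le> \<rho> / m * sqrt (hs_sq1 m u) * sqrt (hs_sq1 m w))"

definition traceless_block :: "nat \<Rightarrow> tensor_op \<Rightarrow> nat \<Rightarrow> nat \<Rightarrow> tensor_op" where
  "traceless_block m X a a' =
     (\<lambda>i j. block X a a' i j - (if a = a' then ptrace1 m X i j / of_nat m else 0))"

definition restrict_op :: "nat \<Rightarrow> nat \<Rightarrow> tensor_op \<Rightarrow> tensor_op" where
  "restrict_op m n X = (\<lambda>i j. if i \<in> idx m n \<and> j \<in> idx m n then X i j else 0)"

definition matrix_unit :: "nat list \<times> nat list \<Rightarrow> tensor_op" where
  "matrix_unit p = (\<lambda>i j. if (i, j) = p then 1 else 0)"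

text \<open>Tested against \<open>s = cnj (M t)\<close>, the bilinear bound gives \<open>\<parallel>M t\<parallel>\<^sup>2 \<le> C \<parallel>M t\<parallel> \<parallel>t\<parallel>\<close>.\<close>
lemma kernel_apply_sq_le:
  assumes fin: "finite P" "finite Q" and C: "0 \<le> C"
    and bnd: "\<And>s t. cmod (\<Sum>p\<in>P. \<Sum>q\<in>Q. M p q * s p * t q)
        \<le> C * sqrt (\<Sum>p\<in>P. (cmod (s p))\<^sup>2) * sqrt (\<Sum>q\<in>Q. (cmod (t q))\<^sup>2)"
  shows "(\<Sum>p\<in>P. (cmod (\<Sum>q\<in>Q. M p q * t q))\<^sup>2) \<le> C\<^sup>2 * (\<Sum>q\<in>Q. (cmod (t q))\<^sup>2)"
proof -
  define r where "r p = (\<Sum>q\<in>Q. M p q * t q)" for p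
  define R where "R = (\<Sum>p\<in>P. (cmod (r p))\<^sup>2)"
  define T where "T = (\<Sum>q\<in>Q. (cmod (t q))\<^sup>2)"
  have R0: "0 \<le> R" and T0: "0 \<le> T"
    unfolding R_def T_def by (simp_all add: sum_nonneg)
  have "(\<Sum>q\<in>Q. M p q * c * t q) = c * r p" for p c
    unfolding r_def by (simp add: sum_distrib_left ac_simps)
  then have "(\<Sum>p\<in>P. \<Sum>q\<in>Q. M p q * cnj (r p) * t q) = (\<Sum>p\<in>P. cnj (r p) * r p)"
    by simp
  also have "\<dots> = complex_of_real R"
    unfolding R_def of_real_sum complex_norm_square by (simp only: mult.commute)
  finally have "R \<le> C * sqrt (\<Sum>p\<in>P. (cmod (cnj (r p)))\<^sup>2) * sqrt T"
    using bnd[of "\<lambda>p. cnj (r p)" t] R0 unfolding T_def by simp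
  then have "R \<le> C * sqrt R * sqrt T"
    unfolding R_def by simp
  have "sqrt R \<le> C * sqrt T"
  proof (cases "R = 0")
    case False
    then have "0 < sqrt R"
      using R0 by simp
    moreover have "sqrt R * sqrt R \<le> (C * sqrt T) * sqrt R"
      using \<open>R \<le> C * sqrt R * sqrt T\<close> R0 by (simp add: ac_simps)
    ultimately show ?thesis
      by (meson mult_right_le_imp_le)
  qed (simp add: C T0)
  then have "(sqrt R)\<^sup>2 \<le> (C * sqrt T)\<^sup>2"
    using R0 by (intro power_mono) simp_all
  then show ?thesis
    using R0 T0 by (simp add: R_def T_def r_def power_mult_distrib)
qed

lemma cmod_diff_sq: "(cmod (z - w))\<^sup>2 = (cmod z)\<^sup>2 - 2 * Re (z * cnj w) + (cmod w)\<^sup>2"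
  by (simp only: cmod_power2) (simp add: power2_eq_square algebra_simps)

lemma hs_sq_nonneg: "0 \<le> hs_sq m n X"
  unfolding hs_sq_def by (simp add: sum_nonneg)

lemma hs_sq1_trace_decomp:
  assumes "0 < m"
  shows "hs_sq1 m u = (cmod (\<Sum>a<m. u a a))\<^sup>2 / m +
     hs_sq1 m (\<lambda>a a'. u a a' - (if a = a' then (\<Sum>c<m. u c c) / of_nat m else 0))"
proof -
  define t where "t = (\<Sum>c<m. u c c)"
  have "hs_sq1 m (\<lambda>a a'. u a a' - (if a = a' then t / of_nat m else 0))
      = (\<Sum>a<m. \<Sum>a'<m. (cmod (u a a'))\<^sup>2 - (if a = a' then 2 * Re (u a a * cnj t) / m - (cmod t)\<^sup>2 / m\<^sup>2 else 0))"
    unfolding hs_sq1_def using assms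
    by (intro sum.cong refl) (auto simp: cmod_diff_sq norm_divide power_divide field_simps)
  also have "\<dots> = hs_sq1 m u - (\<Sum>a<m. 2 * Re (u a a * cnj t) / m - (cmod t)\<^sup>2 / m\<^sup>2)"
    by (simp add: hs_sq1_def sum_subtractf sum.If_cases)
  also have "(\<Sum>a<m. 2 * Re (u a a * cnj t) / m - (cmod t)\<^sup>2 / m\<^sup>2) = 2 * Re (t * cnj t) / m - m * (cmod t)\<^sup>2 / m\<^sup>2"
  proof -
    have "(\<Sum>a<m. 2 * Re (u a a * cnj t) / m) = 2 * Re ((\<Sum>a<m. u a a) * cnj t) / m"
      by (simp only: sum_distrib_right Re_sum sum_divide_distrib[symmetric] sum_distrib_left[symmetric])
    then show ?thesis
      unfolding t_def by (simp add: sum_subtractf)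
  qed
  also have "\<dots> = (cmod t)\<^sup>2 / m"
    using assms by (simp add: complex_norm_square[symmetric] power2_eq_square field_simps del: complex_norm_square)
  finally show ?thesis
    unfolding t_def by simp
qed

lemma hs_sq_Suc:
  assumes "0 < m"
  shows "hs_sq m (Suc n) X = hs_sq m n (ptrace1 m X) / m + (\<Sum>a<m. \<Sum>a'<m. hs_sq m n (traceless_block m X a a'))"
proof -
  have "hs_sq m (Suc n) X = (\<Sum>xs\<in>idx m n. \<Sum>ys\<in>idx m n. hs_sq1 m (\<lambda>a a'. X (a # xs) (a' # ys)))"
    unfolding hs_sq_def hs_sq1_def by (simp add: sum_idx_Suc sum.swap[of _ "{..<m}" "idx m n"])
  also have "\<dots> = (\<Sum>xs\<in>idx m n. \<Sum>ys\<in>idx m n. (cmod (\<Sum>a<m. X (a # xs) (a # ys)))\<^sup>2 / m +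
      hs_sq1 m (\<lambda>a a'. X (a # xs) (a' # ys) - (if a = a' then (\<Sum>c<m. X (c # xs) (c # ys)) / of_nat m else 0)))"
    by (intro sum.cong refl) (rule hs_sq1_trace_decomp[OF assms])
  also have "\<dots> = hs_sq m n (ptrace1 m X) / m + (\<Sum>a<m. \<Sum>a'<m. hs_sq m n (traceless_block m X a a'))"
    unfolding hs_sq_def hs_sq1_def traceless_block_def block_def ptrace1_def
    by (simp add: sum.distrib sum_divide_distrib sum.swap[of _ "{..<m}" "idx m n"])
  finally show ?thesis .
qed

lemma block_eq_traceless_block:
  "block X = (\<lambda>a a' i j. traceless_block m X a a' i j + (if a = a' then ptrace1 m X i j / of_nat m else 0))"
  by (intro ext) (simp add: traceless_block_def)

lemma sum_traceless_block_diag: "0 < m \<Longrightarrow> (\<Sum>a<m. traceless_block m X a a i j) = 0"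
  by (simp add: traceless_block_def sum_subtractf ptrace1_def block_def)

lemma restrict_op_eq_sum_units:
  "restrict_op m n X = (\<lambda>i j. \<Sum>p\<in>idx m n \<times> idx m n. X (fst p) (snd p) * matrix_unit p i j)"
proof (intro ext)
  fix i j
  have "(\<Sum>p\<in>idx m n \<times> idx m n. X (fst p) (snd p) * matrix_unit p i j)
      = (\<Sum>p\<in>idx m n \<times> idx m n. if p = (i, j) then X (fst p) (snd p) else 0)"
    unfolding matrix_unit_def by (intro sum.cong refl) auto
  then show "restrict_op m n X i j = (\<Sum>p\<in>idx m n \<times> idx m n. X (fst p) (snd p) * matrix_unit p i j)"
    by (simp add: restrict_op_def)
qed

lemma ptrace1_restrict_op: "ptrace1 m (restrict_op m (Suc n) X) = restrict_op m n (ptrace1 m X)"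
  unfolding ptrace1_def restrict_op_def by (auto intro!: ext sum.cong)

lemma block_restrict_op: "a < m \<Longrightarrow> a' < m \<Longrightarrow> block (restrict_op m (Suc n) X) a a' = restrict_op m n (block X a a')"
  unfolding block_def restrict_op_def by (auto intro!: ext)

lemma level_form_restrict_op:
  "level_form m \<psi> n h (restrict_op m n X) (restrict_op m n Y) = level_form m \<psi> n h X Y"
proof (induction n arbitrary: h X Y)
  case (Suc n)
  have "site_contract m \<phi> (level_form m \<psi> n h') (block (restrict_op m (Suc n) X)) (block (restrict_op m (Suc n) Y))
      = site_contract m \<phi> (level_form m \<psi> n h') (block X) (block Y)" for \<phi> h'
    unfolding site_contract_def by (intro sum.cong refl) (simp add: block_restrict_op Suc)
  then show ?case
    by (simp add: ptrace1_restrict_op Suc)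
qed (simp add: restrict_op_def idx_0)

lemma level_form_expand:
  "level_form m \<psi> n h X Y = (\<Sum>p\<in>idx m n \<times> idx m n. \<Sum>q\<in>idx m n \<times> idx m n.
      X (fst p) (snd p) * Y (fst q) (snd q) * level_form m \<psi> n h (matrix_unit p) (matrix_unit q))"
proof -
  have "level_form m \<psi> n h X Y = level_form m \<psi> n h (restrict_op m n X) (restrict_op m n Y)"
    by (simp add: level_form_restrict_op)
  also have "\<dots> = (\<Sum>p\<in>idx m n \<times> idx m n. \<Sum>q\<in>idx m n \<times> idx m n.
      X (fst p) (snd p) * (Y (fst q) (snd q) * level_form m \<psi> n h (matrix_unit p) (matrix_unit q)))"
    unfolding restrict_op_eq_sum_units
    by (simp add: op_bilinear_sum_left[OF op_bilinear_level_form] op_bilinear_sum_right[OF op_bilinear_level_form]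
        op_bilinear_scale_left[OF op_bilinear_level_form] op_bilinear_scale_right[OF op_bilinear_level_form]
        sum_distrib_left)
  finally show ?thesis
    by (simp add: ac_simps)
qed

lemma hs_sq_pairs: "hs_sq m n X = (\<Sum>p\<in>idx m n \<times> idx m n. (cmod (X (fst p) (snd p)))\<^sup>2)"
  unfolding hs_sq_def by (simp add: sum.cartesian_product split_beta)

lemma sum_hs_sq1_kernel_apply_le:
  fixes \<alpha> :: "tensor_op \<Rightarrow> tensor_op \<Rightarrow> complex"
  assumes C: "0 \<le> C"
    and expand: "\<And>X Y. \<alpha> X Y = (\<Sum>p\<in>idx m n \<times> idx m n. \<Sum>q\<in>idx m n \<times> idx m n.
        X (fst p) (snd p) * Y (fst q) (snd q) * \<alpha> (matrix_unit p) (matrix_unit q))"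
    and bound: "\<And>X Y. cmod (\<alpha> X Y) \<le> C * sqrt (hs_sq m n X) * sqrt (hs_sq m n Y)"
  shows "(\<Sum>p\<in>idx m n \<times> idx m n. hs_sq1 m (\<lambda>b b'. \<Sum>q\<in>idx m n \<times> idx m n.
      \<alpha> (matrix_unit p) (matrix_unit q) * V b b' (fst q) (snd q))) \<le> C\<^sup>2 * (\<Sum>b<m. \<Sum>b'<m. hs_sq m n (V b b'))"
proof -
  let ?P = "idx m n \<times> idx m n"
  have kernel_bound: "cmod (\<Sum>p\<in>?P. \<Sum>q\<in>?P. \<alpha> (matrix_unit p) (matrix_unit q) * s p * t q)
      \<le> C * sqrt (\<Sum>p\<in>?P. (cmod (s p))\<^sup>2) * sqrt (\<Sum>q\<in>?P. (cmod (t q))\<^sup>2)" for s t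
  proof -
    have "\<alpha> (\<lambda>i j. s (i, j)) (\<lambda>i j. t (i, j))
        = (\<Sum>p\<in>?P. \<Sum>q\<in>?P. \<alpha> (matrix_unit p) (matrix_unit q) * s p * t q)"
      unfolding expand[of "\<lambda>i j. s (i, j)"] by (simp add: ac_simps)
    then show ?thesis
      using bound[of "\<lambda>i j. s (i, j)" "\<lambda>i j. t (i, j)"] by (simp add: hs_sq_pairs)
  qed
  have "(\<Sum>p\<in>?P. hs_sq1 m (\<lambda>b b'. \<Sum>q\<in>?P. \<alpha> (matrix_unit p) (matrix_unit q) * V b b' (fst q) (snd q)))
      = (\<Sum>b<m. \<Sum>b'<m. \<Sum>p\<in>?P. (cmod (\<Sum>q\<in>?P. \<alpha> (matrix_unit p) (matrix_unit q) * V b b' (fst q) (snd q)))\<^sup>2)"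
    unfolding hs_sq1_def by (simp add: sum.swap[of _ ?P "{..<m}"])
  also have "\<dots> \<le> (\<Sum>b<m. \<Sum>b'<m. C\<^sup>2 * hs_sq m n (V b b'))"
    unfolding hs_sq_pairs by (intro sum_mono kernel_apply_sq_le[OF _ _ C kernel_bound]) simp_all
  finally show ?thesis
    by (simp add: sum_distrib_left)
qed

text \<open>Expanding \<open>\<alpha>\<close> in matrix units reduces the estimate to the single-site bound for each
  pair \<open>p\<close> of remaining indices; Cauchy-Schwarz over \<open>p\<close> and the operator bound for \<open>\<alpha>\<close> finish it.\<close>
lemma centered_contract_bound:
  fixes \<alpha> :: "tensor_op \<Rightarrow> tensor_op \<Rightarrow> complex"
  assumes sb: "centered_corr_bound m \<psi> \<rho>" and \<rho>: "0 \<le> \<rho>" and m: "0 < m" and C: "0 \<le> C"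
    and expand: "\<And>X Y. \<alpha> X Y = (\<Sum>p\<in>idx m n \<times> idx m n. \<Sum>q\<in>idx m n \<times> idx m n.
        X (fst p) (snd p) * Y (fst q) (snd q) * \<alpha> (matrix_unit p) (matrix_unit q))"
    and bound: "\<And>X Y. cmod (\<alpha> X Y) \<le> C * sqrt (hs_sq m n X) * sqrt (hs_sq m n Y)"
    and trU: "\<And>i j. (\<Sum>a<m. U a a i j) = 0" and trV: "\<And>i j. (\<Sum>b<m. V b b i j) = 0"
  shows "cmod (site_contract m (centered_state m \<psi>) \<alpha> U V)
    \<le> \<rho> / m * C * sqrt (\<Sum>a<m. \<Sum>a'<m. hs_sq m n (U a a')) * sqrt (\<Sum>b<m. \<Sum>b'<m. hs_sq m n (V b b'))"
proof -
  define P where "P = idx m n \<times> idx m n"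
  define W where "W b b' p = (\<Sum>q\<in>P. \<alpha> (matrix_unit p) (matrix_unit q) * V b b' (fst q) (snd q))" for b b' p
  define NU where "NU p = hs_sq1 m (\<lambda>a a'. U a a' (fst p) (snd p))" for p
  define NW where "NW p = hs_sq1 m (\<lambda>b b'. W b b' p)" for p
  have NU0: "0 \<le> NU p" "0 \<le> NW p" for p
    unfolding NU_def NW_def hs_sq1_def by (simp_all add: sum_nonneg)
  have "\<alpha> (U a a') (V b b') = (\<Sum>p\<in>P. U a a' (fst p) (snd p) * W b b' p)" for a a' b b'
    unfolding expand[of "U a a'"] W_def P_def by (simp add: sum_distrib_left ac_simps)
  then have sc: "site_contract m (centered_state m \<psi>) \<alpha> U V = (\<Sum>p\<in>P. \<Sum>a<m. \<Sum>a'<m. \<Sum>b<m. \<Sum>b'<m.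
      centered_state m \<psi> (a', b') (a, b) * U a a' (fst p) (snd p) * W b b' p)"
    unfolding site_contract_def by (simp add: sum_distrib_left sum.swap[of _ "{..<m}" P] ac_simps)
  have "(\<Sum>b<m. W b b p) = (\<Sum>q\<in>P. \<alpha> (matrix_unit p) (matrix_unit q) * (\<Sum>b<m. V b b (fst q) (snd q)))" for p
    unfolding W_def by (simp add: sum_distrib_left sum.swap[of _ "{..<m}" P])
  then have "(\<Sum>b<m. W b b p) = 0" for p
    using trV by simp
  then have per_pair: "cmod (\<Sum>a<m. \<Sum>a'<m. \<Sum>b<m. \<Sum>b'<m.
      centered_state m \<psi> (a', b') (a, b) * U a a' (fst p) (snd p) * W b b' p) \<le> \<rho> / m * sqrt (NU p) * sqrt (NW p)" for p
    using sb trU unfolding centered_corr_bound_def NU_def NW_def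
    by (elim allE[of _ "\<lambda>a a'. U a a' (fst p) (snd p)"] allE[of _ "\<lambda>b b'. W b b' p"]) simp
  have sum_NW: "(\<Sum>p\<in>P. NW p) \<le> C\<^sup>2 * (\<Sum>b<m. \<Sum>b'<m. hs_sq m n (V b b'))"
    unfolding NW_def W_def P_def by (rule sum_hs_sq1_kernel_apply_le[OF C expand bound])
  have "cmod (site_contract m (centered_state m \<psi>) \<alpha> U V) \<le> (\<Sum>p\<in>P. \<rho> / m * sqrt (NU p) * sqrt (NW p))"
    unfolding sc by (rule order_trans[OF norm_sum sum_mono[OF per_pair]])
  also have "\<dots> = \<rho> / m * (\<Sum>p\<in>P. sqrt (NU p) * sqrt (NW p))"
    by (simp add: sum_distrib_left ac_simps)
  also have "\<dots> \<le> \<rho> / m * (sqrt (\<Sum>p\<in>P. NU p) * sqrt (\<Sum>p\<in>P. NW p))"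
    using \<rho> by (intro mult_left_mono sum_sqrt_mult_le) (auto simp: NU0)
  also have "\<dots> \<le> \<rho> / m * (sqrt (\<Sum>a<m. \<Sum>a'<m. hs_sq m n (U a a')) * (C * sqrt (\<Sum>b<m. \<Sum>b'<m. hs_sq m n (V b b'))))"
  proof -
    have "(\<Sum>p\<in>P. NU p) = (\<Sum>a<m. \<Sum>a'<m. hs_sq m n (U a a'))"
      unfolding NU_def hs_sq1_def hs_sq_pairs P_def by (simp add: sum.swap[of _ "idx m n \<times> idx m n" "{..<m}"])
    moreover have "sqrt (\<Sum>p\<in>P. NW p) \<le> C * sqrt (\<Sum>b<m. \<Sum>b'<m. hs_sq m n (V b b'))"
      using real_sqrt_le_mono[OF sum_NW] C by (simp add: real_sqrt_mult)
    ultimately show ?thesis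
      using \<rho> by (intro mult_left_mono) (auto simp: sum_nonneg hs_sq_nonneg intro!: mult_left_mono)
  qed
  finally show ?thesis
    by (simp add: ac_simps)
qed

lemma weight_shift_bound:
  fixes h :: "nat \<Rightarrow> real"
  assumes \<rho>: "0 \<le> \<rho>" and h: "\<And>k. \<bar>h k\<bar> * \<rho> ^ k \<le> c"
  obtains c' where "\<And>k. \<bar>h (Suc k)\<bar> * \<rho> ^ k \<le> c'" "\<rho> * c' \<le> c"
proof (cases "\<rho> = 0")
  case True
  have "\<bar>h (Suc k)\<bar> * 0 ^ k \<le> \<bar>h 1\<bar>" for k
    by (cases k) simp_all
  then show ?thesis
    using that[of "\<bar>h 1\<bar>"] h[of 0] True by simp
next
  case False
  then have "0 < \<rho>"
    using \<rho> by simp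
  moreover have "\<bar>h (Suc k)\<bar> * \<rho> ^ k * \<rho> \<le> c" for k
    using h[of "Suc k"] by (simp add: ac_simps)
  ultimately show ?thesis
    using that[of "c / \<rho>"] by (simp add: pos_le_divide_eq)
qed

lemma centered_contract_level_form_bound:
  assumes sb: "centered_corr_bound m \<psi> \<rho>" and \<rho>: "0 \<le> \<rho>" and m: "0 < m"
    and mg: "uniform_marginals m \<psi>" and c': "0 \<le> c'" and \<rho>c': "\<rho> * c' \<le> c"
    and bound: "\<And>X Y. cmod (level_form m \<psi> n h X Y) \<le> c' * sqrt (hs_sq m n X) * sqrt (hs_sq m n Y) / real m ^ n"
  shows "cmod (site_contract m (centered_state m \<psi>) (level_form m \<psi> n h) (block X) (block Y))
    \<le> c * (sqrt (\<Sum>a<m. \<Sum>a'<m. hs_sq m n (traceless_block m X a a'))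
        * sqrt (\<Sum>b<m. \<Sum>b'<m. hs_sq m n (traceless_block m Y b b'))) / real m ^ Suc n"
proof -
  let ?SX = "\<Sum>a<m. \<Sum>a'<m. hs_sq m n (traceless_block m X a a')"
  let ?SY = "\<Sum>b<m. \<Sum>b'<m. hs_sq m n (traceless_block m Y b b')"
  have bound': "cmod (level_form m \<psi> n h X Y) \<le> c' / real m ^ n * sqrt (hs_sq m n X) * sqrt (hs_sq m n Y)" for X Y
    using bound[of X Y] by simp
  have split_eq: "site_contract m (centered_state m \<psi>) (level_form m \<psi> n h) (block X) (block Y)
      = site_contract m (centered_state m \<psi>) (level_form m \<psi> n h) (traceless_block m X) (traceless_block m Y)"
    unfolding block_eq_traceless_block[of X m] block_eq_traceless_block[of Y m]
    by (rule centered_contract_add_diag[OF op_bilinear_level_form mg m])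
  have "cmod (site_contract m (centered_state m \<psi>) (level_form m \<psi> n h) (traceless_block m X) (traceless_block m Y))
      \<le> \<rho> / m * (c' / real m ^ n) * sqrt ?SX * sqrt ?SY"
  proof (rule centered_contract_bound[OF sb \<rho> m])
    show "level_form m \<psi> n h X' Y' = (\<Sum>p\<in>idx m n \<times> idx m n. \<Sum>q\<in>idx m n \<times> idx m n.
        X' (fst p) (snd p) * Y' (fst q) (snd q) * level_form m \<psi> n h (matrix_unit p) (matrix_unit q))" for X' Y'
      by (rule level_form_expand)
  qed (use c' bound' sum_traceless_block_diag[OF m] in simp_all)
  also have "\<dots> = \<rho> * c' * (sqrt ?SX * sqrt ?SY) / real m ^ Suc n"
    by simp
  also have "\<dots> \<le> c * (sqrt ?SX * sqrt ?SY) / real m ^ Suc n"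
    using \<rho>c' by (intro divide_right_mono mult_right_mono) (simp_all add: sum_nonneg hs_sq_nonneg)
  finally show ?thesis
    by (simp only: split_eq)
qed

lemma level_form_Suc_bound:
  assumes sb: "centered_corr_bound m \<psi> \<rho>" and \<rho>: "0 \<le> \<rho>" and m: "0 < m"
    and mg: "uniform_marginals m \<psi>" and c: "0 \<le> c" and c': "0 \<le> c'" and \<rho>c': "\<rho> * c' \<le> c"
    and bound: "\<And>X Y. cmod (level_form m \<psi> n h X Y) \<le> c * sqrt (hs_sq m n X) * sqrt (hs_sq m n Y) / real m ^ n"
    and shifted_bound: "\<And>X Y. cmod (level_form m \<psi> n (\<lambda>k. h (Suc k)) X Y)
      \<le> c' * sqrt (hs_sq m n X) * sqrt (hs_sq m n Y) / real m ^ n"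
  shows "cmod (level_form m \<psi> (Suc n) h X Y)
    \<le> c * sqrt (hs_sq m (Suc n) X) * sqrt (hs_sq m (Suc n) Y) / real m ^ Suc n"
proof -
  define SX where "SX = (\<Sum>a<m. \<Sum>a'<m. hs_sq m n (traceless_block m X a a'))"
  define SY where "SY = (\<Sum>b<m. \<Sum>b'<m. hs_sq m n (traceless_block m Y b b'))"
  define tX where "tX = hs_sq m n (ptrace1 m X)"
  define tY where "tY = hs_sq m n (ptrace1 m Y)"
  have nn: "0 \<le> SX" "0 \<le> SY" "0 \<le> tX" "0 \<le> tY"
    unfolding SX_def SY_def tX_def tY_def by (simp_all add: sum_nonneg hs_sq_nonneg)
  have "cmod (level_form m \<psi> n h (ptrace1 m X) (ptrace1 m Y) / (of_nat m)\<^sup>2)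
      \<le> c * sqrt tX * sqrt tY / real m ^ n / (real m)\<^sup>2"
    using bound[of "ptrace1 m X" "ptrace1 m Y"] m
    unfolding tX_def tY_def norm_divide norm_power norm_of_nat
    by (intro divide_right_mono) simp_all
  also have "\<dots> = c * (sqrt (tX / m) * sqrt (tY / m)) / real m ^ Suc n"
    using m nn by (simp add: real_sqrt_divide field_simps power2_eq_square)
  finally have trace_part: "cmod (level_form m \<psi> n h (ptrace1 m X) (ptrace1 m Y) / (of_nat m)\<^sup>2)
      \<le> c * (sqrt (tX / m) * sqrt (tY / m)) / real m ^ Suc n" .
  have traceless_part: "cmod (site_contract m (centered_state m \<psi>) (level_form m \<psi> n (\<lambda>k. h (Suc k)))
      (block X) (block Y)) \<le> c * (sqrt SX * sqrt SY) / real m ^ Suc n"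
    unfolding SX_def SY_def using shifted_bound by (rule centered_contract_level_form_bound[OF sb \<rho> m mg c' \<rho>c'])
  have "cmod (level_form m \<psi> (Suc n) h X Y) \<le> c * (sqrt (tX / m) * sqrt (tY / m) + sqrt SX * sqrt SY) / real m ^ Suc n"
    using norm_triangle_ineq[THEN order_trans, OF add_mono[OF trace_part traceless_part]]
    by (simp add: distrib_left add_divide_distrib)
  also have "\<dots> \<le> c * (sqrt (tX / m + SX) * sqrt (tY / m + SY)) / real m ^ Suc n"
    using c m nn by (intro divide_right_mono mult_left_mono sqrt_mult_add_le) auto
  also have "tX / m + SX = hs_sq m (Suc n) X"
    unfolding tX_def SX_def by (simp add: hs_sq_Suc[OF m])
  also have "tY / m + SY = hs_sq m (Suc n) Y"
    unfolding tY_def SY_def by (simp add: hs_sq_Suc[OF m])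
  finally show ?thesis
    by (simp add: ac_simps)
qed

lemma level_form_bound:
  assumes sb: "centered_corr_bound m \<psi> \<rho>" and \<rho>: "0 \<le> \<rho>" and m: "0 < m"
    and mg: "uniform_marginals m \<psi>"
  shows "(\<And>k. \<bar>h k\<bar> * \<rho> ^ k \<le> c) \<Longrightarrow>
    cmod (level_form m \<psi> n h X Y) \<le> c * sqrt (hs_sq m n X) * sqrt (hs_sq m n Y) / real m ^ n"
proof (induction n arbitrary: h c X Y)
  case 0
  have "\<bar>h 0\<bar> * (cmod (X [] []) * cmod (Y [] [])) \<le> c * (cmod (X [] []) * cmod (Y [] []))"
    using "0"[of 0] by (intro mult_right_mono) simp_all
  then show ?case
    by (simp add: hs_sq_def idx_0 norm_mult mult.assoc)
next
  case (Suc n)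
  obtain c' where c': "\<And>k. \<bar>h (Suc k)\<bar> * \<rho> ^ k \<le> c'" and \<rho>c': "\<rho> * c' \<le> c"
    using weight_shift_bound[OF \<rho> Suc.prems] by blast
  show ?case
    using Suc.prems[of 0] c'[of 0]
    by (intro level_form_Suc_bound[OF sb \<rho> m mg _ _ \<rho>c' Suc.IH[OF Suc.prems] Suc.IH[OF c']]) simp_all
qed

lemma cmod_entry_le_sqrt:
  assumes "0 < m" and "(1 / real m) * (\<Sum>i<m. \<Sum>j<m. (cmod (P i j))\<^sup>2) = 1" and "i < m" "j < m"
  shows "cmod (P i j) \<le> sqrt (real m)"
proof -
  have "(cmod (P i j))\<^sup>2 \<le> (\<Sum>j<m. (cmod (P i j))\<^sup>2)"
    using assms(4) by (intro member_le_sum) auto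
  also have "\<dots> \<le> (\<Sum>i<m. \<Sum>j<m. (cmod (P i j))\<^sup>2)"
    using assms(3) by (intro member_le_sum[of i "{..<m}" "\<lambda>i. \<Sum>j<m. (cmod (P i j))\<^sup>2"]) (auto intro: sum_nonneg)
  also have "\<dots> = real m"
    using assms(1,2) by (simp add: field_simps)
  finally show ?thesis
    by (simp add: real_le_rsqrt)
qed

lemma corr1_le_maxcorr:
  assumes m: "0 < m" and "ext_on {..<m} P" "ext_on {..<m} Q"
    and "(\<Sum>i<m. P i i) = 0" "(\<Sum>i<m. Q i i) = 0"
    and "(1 / real m) * (\<Sum>i<m. \<Sum>j<m. (cmod (P i j))\<^sup>2) = 1"
    and "(1 / real m) * (\<Sum>i<m. \<Sum>j<m. (cmod (Q i j))\<^sup>2) = 1"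
  shows "cmod (corr1 m \<psi> P Q) \<le> maxcorr m \<psi>"
  unfolding maxcorr_def
proof (rule cSup_upper)
  show "cmod (corr1 m \<psi> P Q) \<in> {cmod (corr1 m \<psi> P Q) | P Q. ext_on {..<m} P \<and> ext_on {..<m} Q \<and>
      (\<Sum>i<m. P i i) = 0 \<and> (\<Sum>i<m. Q i i) = 0 \<and>
      (1 / real m) * (\<Sum>i<m. \<Sum>j<m. (cmod (P i j))\<^sup>2) = 1 \<and>
      (1 / real m) * (\<Sum>i<m. \<Sum>j<m. (cmod (Q i j))\<^sup>2) = 1}"
    using assms by blast
  have "cmod (corr1 m \<psi> P' Q') \<le> (\<Sum>a<m. \<Sum>a'<m. \<Sum>b<m. \<Sum>b'<m. real m * cmod (\<psi> (a', b') (a, b)))"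
    if nP: "(1 / real m) * (\<Sum>i<m. \<Sum>j<m. (cmod (P' i j))\<^sup>2) = 1"
      and nQ: "(1 / real m) * (\<Sum>i<m. \<Sum>j<m. (cmod (Q' i j))\<^sup>2) = 1" for P' Q'
  proof -
    have "cmod (cnj (P' a' a) * Q' b b' * \<psi> (a', b') (a, b)) \<le> real m * cmod (\<psi> (a', b') (a, b))"
      if "a < m" "a' < m" "b < m" "b' < m" for a a' b b'
    proof -
      have "cmod (P' a' a) * cmod (Q' b b') \<le> sqrt (real m) * sqrt (real m)"
        using that cmod_entry_le_sqrt[OF m nP] cmod_entry_le_sqrt[OF m nQ] by (intro mult_mono) auto
      then show ?thesis
        by (simp add: norm_mult mult_right_mono)
    qed
    then show ?thesis
      unfolding corr1_def
      by (intro order_trans[OF norm_sum sum_mono] order_trans[OF norm_sum sum_mono] norm_sum[THEN order_trans]) simp_all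
  qed
  then show "bdd_above {cmod (corr1 m \<psi> P Q) | P Q. ext_on {..<m} P \<and> ext_on {..<m} Q \<and>
      (\<Sum>i<m. P i i) = 0 \<and> (\<Sum>i<m. Q i i) = 0 \<and>
      (1 / real m) * (\<Sum>i<m. \<Sum>j<m. (cmod (P i j))\<^sup>2) = 1 \<and>
      (1 / real m) * (\<Sum>i<m. \<Sum>j<m. (cmod (Q i j))\<^sup>2) = 1}"
    unfolding bdd_above_def by blast
qed

lemma hs_sq1_eq_0_iff: "hs_sq1 m u = 0 \<longleftrightarrow> (\<forall>a<m. \<forall>a'<m. u a a' = 0)"
  unfolding hs_sq1_def by (simp add: sum_nonneg_eq_0_iff sum_nonneg Ball_def)

lemma hs_sq1_nonneg: "0 \<le> hs_sq1 m u"
  unfolding hs_sq1_def by (simp add: sum_nonneg)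

lemma centered_contract_traceless:
  assumes "(\<Sum>a<m. u a a) = 0"
  shows "(\<Sum>a<m. \<Sum>a'<m. \<Sum>b<m. \<Sum>b'<m. centered_state m \<psi> (a', b') (a, b) * u a a' * w b b')
    = (\<Sum>a<m. \<Sum>a'<m. \<Sum>b<m. \<Sum>b'<m. \<psi> (a', b') (a, b) * u a a' * w b b')"
proof -
  define \<beta> :: "tensor_op \<Rightarrow> tensor_op \<Rightarrow> complex" where "\<beta> X Y = X [] [] * Y [] []" for X Y
  have "op_bilinear \<beta>"
    by (simp add: op_bilinear_def \<beta>_def algebra_simps)
  from site_contract_split[OF this, of m \<psi> "\<lambda>a a' _ _. u a a'" "\<lambda>b b' _ _. w b b'"]
  show ?thesis
    using assms by (simp add: site_contract_def \<beta>_def mult.assoc)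
qed

lemma corr1_le_maxcorr_scaled:
  assumes m: "0 < m" and P: "ext_on {..<m} P" "(\<Sum>i<m. P i i) = 0" "0 < hs_sq1 m P"
    and Q: "ext_on {..<m} Q" "(\<Sum>i<m. Q i i) = 0" "0 < hs_sq1 m Q"
  shows "cmod (corr1 m \<psi> P Q) \<le> maxcorr m \<psi> / m * sqrt (hs_sq1 m P) * sqrt (hs_sq1 m Q)"
proof -
  define s where "s = sqrt (real m / hs_sq1 m P)"
  define s' where "s' = sqrt (real m / hs_sq1 m Q)"
  have s: "0 < s" "0 < s'"
    unfolding s_def s'_def using m P(3) Q(3) by simp_all
  have "(1 / real m) * (\<Sum>i<m. \<Sum>j<m. (cmod (of_real c * X i j))\<^sup>2) = c\<^sup>2 * hs_sq1 m X / m" for c X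
    by (simp add: hs_sq1_def norm_mult power_mult_distrib sum_distrib_left sum_divide_distrib)
  then have "(1 / real m) * (\<Sum>i<m. \<Sum>j<m. (cmod (of_real s * P i j))\<^sup>2) = 1"
    "(1 / real m) * (\<Sum>i<m. \<Sum>j<m. (cmod (of_real s' * Q i j))\<^sup>2) = 1"
    using m P(3) Q(3) by (simp_all add: s_def s'_def)
  then have "cmod (corr1 m \<psi> (\<lambda>i j. of_real s * P i j) (\<lambda>i j. of_real s' * Q i j)) \<le> maxcorr m \<psi>"
    using P(1,2) Q(1,2) by (intro corr1_le_maxcorr[OF m]) (simp_all add: ext_on_def flip: sum_distrib_left)
  moreover have "corr1 m \<psi> (\<lambda>i j. of_real s * P i j) (\<lambda>i j. of_real s' * Q i j) = of_real (s * s') * corr1 m \<psi> P Q"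
    by (simp add: corr1_def sum_distrib_left ac_simps)
  ultimately have "cmod (corr1 m \<psi> P Q) \<le> maxcorr m \<psi> / (s * s')"
    using s by (simp add: norm_mult field_simps)
  also have "\<dots> = maxcorr m \<psi> / m * sqrt (hs_sq1 m P) * sqrt (hs_sq1 m Q)"
    unfolding s_def s'_def using m P(3) Q(3) by (simp add: real_sqrt_divide field_simps)
  finally show ?thesis .
qed

lemma traceless_corr_le_maxcorr:
  assumes m: "0 < m" and tu: "(\<Sum>a<m. u a a) = 0" and tw: "(\<Sum>b<m. w b b) = 0"
    and Nu: "0 < hs_sq1 m u" and Nw: "0 < hs_sq1 m w"
  shows "cmod (\<Sum>a<m. \<Sum>a'<m. \<Sum>b<m. \<Sum>b'<m. \<psi> (a', b') (a, b) * u a a' * w b b')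
    \<le> maxcorr m \<psi> / m * sqrt (hs_sq1 m u) * sqrt (hs_sq1 m w)"
proof -
  define P where "P i j = (if i < m \<and> j < m then cnj (u j i) else 0)" for i j
  define Q where "Q i j = (if i < m \<and> j < m then w i j else 0)" for i j
  have "hs_sq1 m P = (\<Sum>i<m. \<Sum>j<m. (cmod (u j i))\<^sup>2)"
    unfolding hs_sq1_def P_def by simp
  also have "\<dots> = hs_sq1 m u"
    unfolding hs_sq1_def by (rule sum.swap)
  moreover have "hs_sq1 m Q = hs_sq1 m w"
    unfolding hs_sq1_def Q_def by simp
  moreover have "corr1 m \<psi> P Q = (\<Sum>a<m. \<Sum>a'<m. \<Sum>b<m. \<Sum>b'<m. \<psi> (a', b') (a, b) * u a a' * w b b')"
    unfolding corr1_def P_def Q_def by (simp add: ac_simps)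
  moreover have "ext_on {..<m} P" "ext_on {..<m} Q" "(\<Sum>i<m. P i i) = 0" "(\<Sum>i<m. Q i i) = 0"
    unfolding ext_on_def P_def Q_def using tu tw by (simp_all flip: cnj_sum)
  ultimately show ?thesis
    using corr1_le_maxcorr_scaled[OF m, of P Q \<psi>] Nu Nw by simp
qed

lemma centered_corr_bound_maxcorr:
  assumes m: "0 < m" and \<rho>: "0 \<le> maxcorr m \<psi>"
  shows "centered_corr_bound m \<psi> (maxcorr m \<psi>)"
  unfolding centered_corr_bound_def
proof (intro allI impI)
  fix u w :: "nat \<Rightarrow> nat \<Rightarrow> complex"
  assume tu: "(\<Sum>a<m. u a a) = 0" and tw: "(\<Sum>b<m. w b b) = 0"
  show "cmod (\<Sum>a<m. \<Sum>a'<m. \<Sum>b<m. \<Sum>b'<m. centered_state m \<psi> (a', b') (a, b) * u a a' * w b b')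
      \<le> maxcorr m \<psi> / m * sqrt (hs_sq1 m u) * sqrt (hs_sq1 m w)"
  proof (cases "hs_sq1 m u = 0 \<or> hs_sq1 m w = 0")
    case True
    then have "(\<Sum>a<m. \<Sum>a'<m. \<Sum>b<m. \<Sum>b'<m. \<psi> (a', b') (a, b) * u a a' * w b b') = 0"
      by (auto simp: hs_sq1_eq_0_iff)
    then show ?thesis
      using \<rho> hs_sq1_nonneg[of m u] hs_sq1_nonneg[of m w]
      by (simp add: centered_contract_traceless[where m = m and u = u, OF tu])
  next
    case False
    then show ?thesis
      using traceless_corr_le_maxcorr[where u = u and w = w, OF m tu tw] hs_sq1_nonneg[of m u] hs_sq1_nonneg[of m w]
      by (simp add: centered_contract_traceless[where m = m and u = u, OF tu])
  qed
qed

section \<open>The noise operator\<close>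

text \<open>\<open>depolarize m k X\<close> is \<open>tr\<^sub>k X \<otimes> id/m\<close>, with the identity factor put back in position \<open>k\<close>.\<close>
definition depolarize :: "nat \<Rightarrow> nat \<Rightarrow> tensor_op \<Rightarrow> tensor_op" where
  "depolarize m k X = (\<lambda>i j. if i ! k = j ! k \<and> i ! k < m
     then (\<Sum>u<m. X (i[k := u]) (j[k := u])) / of_nat m else 0)"

definition site_noise :: "nat \<Rightarrow> real \<Rightarrow> nat \<Rightarrow> tensor_op \<Rightarrow> tensor_op" where
  "site_noise m g k X = (\<lambda>i j. of_real g * X i j + of_real (1 - g) * depolarize m k X i j)"

fun noise :: "nat \<Rightarrow> real \<Rightarrow> nat \<Rightarrow> nat \<Rightarrow> tensor_op \<Rightarrow> tensor_op" where
  "noise m g s 0 X = X"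
| "noise m g s (Suc n) X = site_noise m g s (noise m g (Suc s) n X)"

lemma block_depolarize_Suc: "block (depolarize m (Suc k) X) a a' = depolarize m k (block X a a')"
  by (simp add: depolarize_def block_def list_update_code cong: if_cong)

lemma block_site_noise_Suc: "block (site_noise m g (Suc k) X) a a' = site_noise m g k (block X a a')"
  by (simp add: site_noise_def block_depolarize_Suc[symmetric]) (simp add: block_def)

lemma block_noise_Suc: "block (noise m g (Suc s) n X) a a' = noise m g s n (block X a a')"
  by (induction n arbitrary: s) (simp_all add: block_site_noise_Suc)

lemma block_site_noise_0:
  "a < m \<Longrightarrow> block (site_noise m g 0 X) a a' =
    (\<lambda>i j. of_real g * block X a a' i j + (if a = a' then of_real (1 - g) * ptrace1 m X i j / of_nat m else 0))"
  by (auto simp: site_noise_def depolarize_def block_def ptrace1_def list_update_code intro!: ext)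

lemma depolarize_linear:
  "depolarize m k (\<lambda>i j. c * X i j + X' i j) = (\<lambda>i j. c * depolarize m k X i j + depolarize m k X' i j)"
  by (auto simp: depolarize_def sum.distrib sum_distrib_left add_divide_distrib intro!: ext)

lemma site_noise_linear:
  "site_noise m g k (\<lambda>i j. c * X i j + X' i j) = (\<lambda>i j. c * site_noise m g k X i j + site_noise m g k X' i j)"
  by (simp only: site_noise_def depolarize_linear) (simp add: algebra_simps)

lemma noise_linear:
  "noise m g s n (\<lambda>i j. c * X i j + X' i j) = (\<lambda>i j. c * noise m g s n X i j + noise m g s n X' i j)"
  by (induction n arbitrary: s) (simp_all add: site_noise_linear)

lemma noise_zero: "noise m g s n (\<lambda>i j. 0) = (\<lambda>i j. 0)"
  using noise_linear[of m g s n "-1" "\<lambda>i j. 0" "\<lambda>i j. 0"] by simp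

lemma noise_sum:
  "finite U \<Longrightarrow> noise m g s n (\<lambda>i j. \<Sum>u\<in>U. F u i j) = (\<lambda>i j. \<Sum>u\<in>U. noise m g s n (F u) i j)"
proof (induction U rule: finite_induct)
  case (insert x U)
  then show ?case
    using noise_linear[of m g s n 1 "F x" "\<lambda>i j. \<Sum>u\<in>U. F u i j"] by simp
qed (simp add: noise_zero)

lemma ptrace1_noise_Suc: "ptrace1 m (noise m g (Suc s) n X) = noise m g s n (ptrace1 m X)"
  by (simp add: ptrace1_eq_sum_block noise_sum block_noise_Suc)

lemma ptrace1_site_noise_0:
  assumes "0 < m"
  shows "ptrace1 m (site_noise m g 0 X) = ptrace1 m X"
proof (intro ext)
  fix i j
  have "ptrace1 m (site_noise m g 0 X) i j
      = (\<Sum>a<m. of_real g * block X a a i j + of_real (1 - g) * ptrace1 m X i j / of_nat m)"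
    unfolding ptrace1_eq_sum_block[of m "site_noise m g 0 X"] by (simp add: block_site_noise_0)
  also have "\<dots> = of_real g * ptrace1 m X i j + of_real (1 - g) * ptrace1 m X i j"
    using assms by (simp add: sum.distrib sum_distrib_left[symmetric] ptrace1_eq_sum_block)
  finally show "ptrace1 m (site_noise m g 0 X) i j = ptrace1 m X i j"
    by (simp add: algebra_simps)
qed

lemma site_contract_cong:
  assumes "\<And>a a'. a < m \<Longrightarrow> a' < m \<Longrightarrow> U a a' = U' a a'" "\<And>b b'. b < m \<Longrightarrow> b' < m \<Longrightarrow> V b b' = V' b b'"
  shows "site_contract m \<phi> \<beta> U V = site_contract m \<phi> \<beta> U' V'"
  unfolding site_contract_def using assms by (intro sum.cong refl) simp

lemma centered_contract_site_noise_0: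
  assumes "op_bilinear \<beta>" "uniform_marginals m \<psi>" "0 < m"
  shows "site_contract m (centered_state m \<psi>) \<beta> (block (site_noise m g 0 X)) (block (site_noise m g 0 Y))
    = of_real (g\<^sup>2) * site_contract m (centered_state m \<psi>) \<beta> (block X) (block Y)"
proof -
  have "site_contract m (centered_state m \<psi>) \<beta> (block (site_noise m g 0 X)) (block (site_noise m g 0 Y))
      = site_contract m (centered_state m \<psi>) \<beta> (\<lambda>a a' i j. of_real g * block X a a' i j) (\<lambda>b b' i j. of_real g * block Y b b' i j)"
    by (simp only: site_contract_cong[OF block_site_noise_0 block_site_noise_0] centered_contract_add_diag[OF assms])
  also have "\<dots> = of_real (g\<^sup>2) * site_contract m (centered_state m \<psi>) \<beta> (block X) (block Y)"
    unfolding site_contract_def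
    by (simp add: op_bilinear_scale_left[OF assms(1)] op_bilinear_scale_right[OF assms(1)] sum_distrib_left
        power2_eq_square ac_simps)
  finally show ?thesis .
qed

text \<open>Site noise keeps the partial trace and scales the traceless blocks by \<open>g\<close>, so every factor
  \<open>\<psi>'\<close> of the expansion picks up \<open>g\<^sup>2\<close>.\<close>
lemma corr_noise:
  assumes mg: "uniform_marginals m \<psi>" and m: "0 < m"
  shows "corr m n \<psi> (noise m g 0 n X) (noise m g 0 n Y) = level_form m \<psi> n (\<lambda>k. g ^ (2 * k)) X Y"
proof (induction n arbitrary: X Y)
  case 0
  then show ?case by (simp add: corr_eq_level_form)
next
  case (Suc n)
  let ?h = "\<lambda>k. g ^ (2 * k)" and ?\<psi>' = "centered_state m \<psi>"
  define Z where "Z = noise m g (Suc 0) n X"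
  define W where "W = noise m g (Suc 0) n Y"
  have "corr m (Suc n) \<psi> (noise m g 0 (Suc n) X) (noise m g 0 (Suc n) Y)
      = site_contract m \<psi> (corr m n \<psi>) (block (site_noise m g 0 Z)) (block (site_noise m g 0 W))"
    by (simp add: Z_def W_def corr_Suc)
  also have "\<dots> = corr m n \<psi> (ptrace1 m Z) (ptrace1 m W) / (of_nat m)\<^sup>2
        + of_real (g\<^sup>2) * site_contract m ?\<psi>' (corr m n \<psi>) (block Z) (block W)"
    by (subst site_contract_split[OF op_bilinear_corr])
      (simp add: ptrace1_site_noise_0[OF m] centered_contract_site_noise_0[OF op_bilinear_corr mg m]
        flip: ptrace1_eq_sum_block)
  also have "\<dots> = level_form m \<psi> n ?h (ptrace1 m X) (ptrace1 m Y) / (of_nat m)\<^sup>2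
        + of_real (g\<^sup>2) * site_contract m ?\<psi>' (level_form m \<psi> n ?h) (block X) (block Y)"
    by (simp add: Z_def W_def ptrace1_noise_Suc site_contract_def block_noise_Suc Suc)
  also have "\<dots> = level_form m \<psi> (Suc n) ?h X Y"
  proof -
    have "(\<lambda>k. g ^ (2 * Suc k)) = (\<lambda>k. g\<^sup>2 * g ^ (2 * k))"
      by (simp add: power_add power2_eq_square ac_simps)
    moreover have "level_form m \<psi> n (\<lambda>k. g\<^sup>2 * g ^ (2 * k)) = (\<lambda>A B. of_real (g\<^sup>2) * level_form m \<psi> n ?h A B)"
      by (intro ext) (rule level_form_weight_scale)
    ultimately show ?thesis
      by (simp add: site_contract_scale)
  qed
  finally show ?case .
qed

lemma depolarize_update:
  assumes "i \<in> idx_zero_at m n k" "j \<in> idx_zero_at m n k" "k < n" "c < m" "c' < m"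
  shows "depolarize m k X (i[k:=c]) (j[k:=c']) = (if c = c' then (\<Sum>u<m. X (i[k:=u]) (j[k:=u])) / of_nat m else 0)"
  using assms idx_zero_at_length[OF assms(1)] idx_zero_at_length[OF assms(2)] by (auto simp: depolarize_def)

lemma ext_on_depolarize:
  assumes X: "ext_on (idx m n) X" and k: "k < n"
  shows "ext_on (idx m n) (depolarize m k X)"
  unfolding ext_on_def
proof (intro allI impI)
  fix i j assume ij: "i \<notin> idx m n \<or> j \<notin> idx m n"
  show "depolarize m k X i j = 0"
  proof (cases "i ! k = j ! k \<and> i ! k < m")
    case True
    have Z: "X (i[k:=u]) (j[k:=u]) = 0" if "u < m" for u
    proof -
      have "i[k:=u] \<notin> idx m n \<or> j[k:=u] \<notin> idx m n"
        using ij list_update_notin_idx[OF _ k _ that, of i] list_update_notin_idx[OF _ k _ that, of j] True by auto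
      then show ?thesis using X unfolding ext_on_def by blast
    qed
    then have "(\<Sum>u<m. X (i[k:=u]) (j[k:=u])) = 0" by simp
    then show ?thesis by (simp add: depolarize_def)
  next
    case False then show ?thesis by (auto simp: depolarize_def)
  qed
qed

lemma herm_on_depolarize:
  assumes X: "herm_on (idx m n) X" and k: "k < n"
  shows "herm_on (idx m n) (depolarize m k X)"
  unfolding herm_on_def
proof (intro conjI ballI)
  show "ext_on (idx m n) (depolarize m k X)" using X k ext_on_depolarize by (auto simp: herm_on_def)
next
  fix i j assume i: "i \<in> idx m n" and j: "j \<in> idx m n"
  have "X (i[k:=u]) (j[k:=u]) = cnj (X (j[k:=u]) (i[k:=u]))" if "u < m" for u
    using X list_update_in_idx[OF i k that] list_update_in_idx[OF j k that] unfolding herm_on_def by blast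
  then show "depolarize m k X i j = cnj (depolarize m k X j i)"
    by (auto simp: depolarize_def intro!: sum.cong)
qed

definition qform :: "'a set \<Rightarrow> ('a \<Rightarrow> 'a \<Rightarrow> complex) \<Rightarrow> ('a \<Rightarrow> complex) \<Rightarrow> complex" where
  "qform S X v = (\<Sum>i\<in>S. \<Sum>j\<in>S. cnj (v i) * X i j * v j)"

lemma psd_on_iff_qform: "psd_on S X \<longleftrightarrow> herm_on S X \<and> (\<forall>v. 0 \<le> Re (qform S X v))"
  by (simp add: psd_on_def qform_def)

lemma qform_linear: "qform S (\<lambda>i j. a * X i j + b * Y i j) v = a * qform S X v + b * qform S Y v"
  by (simp add: qform_def algebra_simps sum.distrib sum_distrib_left)

text \<open>\<open>shift_vec v k c u\<close> moves the slice of \<open>v\<close> with \<open>k\<close>-th index \<open>c\<close> to \<open>k\<close>-th index \<open>u\<close>;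
  the quadratic form of \<open>depolarize\<close> is an average of such quadratic forms of \<open>X\<close>.\<close>
definition shift_vec :: "(nat list \<Rightarrow> complex) \<Rightarrow> nat \<Rightarrow> nat \<Rightarrow> nat \<Rightarrow> nat list \<Rightarrow> complex" where
  "shift_vec v k c u x = (if x ! k = u then v (x[k:=c]) else 0)"

lemma qform_depolarize_site:
  assumes k: "k < n" and m: "0 < m"
  shows "qform (idx m n) (depolarize m k X) v = (\<Sum>i\<in>idx_zero_at m n k. \<Sum>j\<in>idx_zero_at m n k. \<Sum>c<m.
      cnj (v (i[k := c])) * ((\<Sum>u<m. X (i[k := u]) (j[k := u])) / of_nat m) * v (j[k := c]))"
  unfolding qform_def sum_idx_idx_site[OF k m]
proof (intro sum.cong refl)
  fix i j c assume "i \<in> idx_zero_at m n k" "j \<in> idx_zero_at m n k" "c \<in> {..<m}"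
  then have "(\<Sum>c'<m. cnj (v (i[k := c])) * depolarize m k X (i[k := c]) (j[k := c']) * v (j[k := c']))
      = (\<Sum>c'<m. if c' = c then cnj (v (i[k := c])) * ((\<Sum>u<m. X (i[k := u]) (j[k := u])) / of_nat m)
          * v (j[k := c']) else 0)"
    using k by (intro sum.cong refl) (auto simp: depolarize_update)
  then show "(\<Sum>c'<m. cnj (v (i[k := c])) * depolarize m k X (i[k := c]) (j[k := c']) * v (j[k := c']))
      = cnj (v (i[k := c])) * ((\<Sum>u<m. X (i[k := u]) (j[k := u])) / of_nat m) * v (j[k := c])"
    using \<open>c \<in> {..<m}\<close> by simp
qed

lemma qform_shift_vec:
  assumes k: "k < n" and m: "0 < m" and u: "u < m"
  shows "qform (idx m n) X (shift_vec v k c u) = (\<Sum>i\<in>idx_zero_at m n k. \<Sum>j\<in>idx_zero_at m n k.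
      cnj (v (i[k := c])) * X (i[k := u]) (j[k := u]) * v (j[k := c]))"
  unfolding qform_def sum_idx_idx_site[OF k m]
proof (intro sum.cong refl)
  fix i j assume "i \<in> idx_zero_at m n k" "j \<in> idx_zero_at m n k"
  then have "length i = n" "length j = n"
    by (simp_all add: idx_zero_at_length)
  then have "(\<Sum>c1<m. \<Sum>c2<m. cnj (shift_vec v k c u (i[k := c1])) * X (i[k := c1]) (j[k := c2])
        * shift_vec v k c u (j[k := c2]))
      = (\<Sum>c1<m. \<Sum>c2<m. if c2 = u then if c1 = u then
          cnj (v (i[k := c])) * X (i[k := c1]) (j[k := c2]) * v (j[k := c]) else 0 else 0)"
    using k by (intro sum.cong refl) (auto simp: shift_vec_def)
  then show "(\<Sum>c1<m. \<Sum>c2<m. cnj (shift_vec v k c u (i[k := c1])) * X (i[k := c1]) (j[k := c2])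
        * shift_vec v k c u (j[k := c2]))
      = cnj (v (i[k := c])) * X (i[k := u]) (j[k := u]) * v (j[k := c])"
    using u by simp
qed

lemma qform_depolarize:
  assumes k: "k < n" and m: "0 < m"
  shows "qform (idx m n) (depolarize m k X) v
    = (\<Sum>c<m. \<Sum>u<m. qform (idx m n) X (shift_vec v k c u)) / of_nat m"
proof -
  have "(\<Sum>c<m. \<Sum>u<m. qform (idx m n) X (shift_vec v k c u))
      = (\<Sum>c<m. \<Sum>u<m. \<Sum>i\<in>idx_zero_at m n k. \<Sum>j\<in>idx_zero_at m n k.
          cnj (v (i[k := c])) * X (i[k := u]) (j[k := u]) * v (j[k := c]))"
    by (intro sum.cong refl) (simp add: qform_shift_vec[OF k m])
  also have "\<dots> = (\<Sum>i\<in>idx_zero_at m n k. \<Sum>j\<in>idx_zero_at m n k. \<Sum>c<m. \<Sum>u<m.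
      cnj (v (i[k := c])) * X (i[k := u]) (j[k := u]) * v (j[k := c]))"
    by (simp add: sum.swap[of _ "{..<m}" "idx_zero_at m n k"])
  finally show ?thesis
    unfolding qform_depolarize_site[OF k m]
    by (simp add: sum_divide_distrib sum_distrib_left sum_distrib_right ac_simps)
qed

lemma psd_on_depolarize:
  assumes X: "psd_on (idx m n) X" and k: "k < n" and m: "0 < m"
  shows "psd_on (idx m n) (depolarize m k X)"
  unfolding psd_on_iff_qform
proof (intro conjI allI)
  show "herm_on (idx m n) (depolarize m k X)" using X k herm_on_depolarize by (auto simp: psd_on_iff_qform)
next
  fix v
  have "0 \<le> (\<Sum>c<m. \<Sum>u<m. Re (qform (idx m n) X (shift_vec v k c u))) / real m"
    using X by (intro divide_nonneg_nonneg sum_nonneg) (auto simp: psd_on_iff_qform)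
  then show "0 \<le> Re (qform (idx m n) (depolarize m k X) v)"
    by (simp add: qform_depolarize[OF k m] Re_sum)
qed

lemma hs_sq_depolarize_le:
  assumes k: "k < n" and m: "0 < m"
  shows "hs_sq m n (depolarize m k X) \<le> hs_sq m n X"
proof -
  have "hs_sq m n (depolarize m k X) = (\<Sum>i\<in>idx_zero_at m n k. \<Sum>j\<in>idx_zero_at m n k. \<Sum>c<m.
      (cmod ((\<Sum>u<m. X (i[k:=u]) (j[k:=u])) / of_nat m))\<^sup>2)"
    unfolding hs_sq_def sum_idx_idx_site[OF k m]
  proof (intro sum.cong refl)
    fix i j c assume i: "i \<in> idx_zero_at m n k" and j: "j \<in> idx_zero_at m n k" and c: "c \<in> {..<m}"
    have "(\<Sum>c'<m. (cmod (depolarize m k X (i[k := c]) (j[k := c'])))\<^sup>2)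
      = (\<Sum>c'<m. if c' = c then (cmod ((\<Sum>u<m. X (i[k:=u]) (j[k:=u])) / of_nat m))\<^sup>2 else 0)"
      using i j k c by (intro sum.cong refl) (auto simp: depolarize_update)
    also have "\<dots> = (cmod ((\<Sum>u<m. X (i[k:=u]) (j[k:=u])) / of_nat m))\<^sup>2"
      using c by (simp add: sum.delta)
    finally show "(\<Sum>c'<m. (cmod (depolarize m k X (i[k := c]) (j[k := c'])))\<^sup>2)
      = (cmod ((\<Sum>u<m. X (i[k:=u]) (j[k:=u])) / of_nat m))\<^sup>2" .
  qed
  also have "\<dots> \<le> (\<Sum>i\<in>idx_zero_at m n k. \<Sum>j\<in>idx_zero_at m n k. \<Sum>c<m. \<Sum>c'<m. (cmod (X (i[k:=c]) (j[k:=c'])))\<^sup>2)"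
  proof (rule sum_mono, rule sum_mono)
    fix i j
    have "(\<Sum>c<m. (cmod ((\<Sum>u<m. X (i[k:=u]) (j[k:=u])) / of_nat m))\<^sup>2)
        = (cmod (\<Sum>u<m. X (i[k:=u]) (j[k:=u])))\<^sup>2 / real m"
      using m by (simp add: norm_divide power_divide power2_eq_square)
    also have "\<dots> \<le> (\<Sum>u<m. (cmod (X (i[k:=u]) (j[k:=u])))\<^sup>2)"
      using cmod_sum_sq_le[of "\<lambda>u. X (i[k:=u]) (j[k:=u])" "{..<m}"] m by (simp add: divide_le_eq ac_simps)
    also have "\<dots> \<le> (\<Sum>c<m. \<Sum>c'<m. (cmod (X (i[k:=c]) (j[k:=c'])))\<^sup>2)"
      by (intro sum_mono member_le_sum) auto
    finally show "(\<Sum>c<m. (cmod ((\<Sum>u<m. X (i[k:=u]) (j[k:=u])) / of_nat m))\<^sup>2)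
        \<le> (\<Sum>c<m. \<Sum>c'<m. (cmod (X (i[k:=c]) (j[k:=c'])))\<^sup>2)" .
  qed
  also have "\<dots> = hs_sq m n X" unfolding hs_sq_def sum_idx_idx_site[OF k m] ..
  finally show ?thesis .
qed

lemma list_update_eq_iff:
  assumes "i ! k = j ! k" "k < length i"
  shows "(i[k:=u] = j[k:=u]) = (i = j)"
proof
  assume e: "i[k:=u] = j[k:=u]"
  have l: "length i = length j" using arg_cong[OF e, of length] by simp
  show "i = j"
  proof (rule nth_equalityI[OF l])
    fix l assume "l < length i"
    then show "i ! l = j ! l" using arg_cong[OF e, of "\<lambda>x. x ! l"] assms l
      by (cases "l = k") (auto simp: nth_list_update)
  qed
qed simp

lemma depolarize_id:
  assumes k: "k < n" and m: "0 < m"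
  shows "depolarize m k (id_on (idx m n)) = id_on (idx m n)"
proof (intro ext)
  fix i j
  show "depolarize m k (id_on (idx m n)) i j = id_on (idx m n) i j"
  proof (cases "i ! k = j ! k \<and> i ! k < m")
    case True
    have t: "(i[k:=u] = j[k:=u] \<and> i[k:=u] \<in> idx m n) = (i = j \<and> i \<in> idx m n)" if u: "u < m" for u
    proof (cases "length i = n")
      case True2: True
      show ?thesis using list_update_in_idx_iff[OF True2 k u] list_update_eq_iff[of i k j u] True True2 k by auto
    next
      case False
      then show ?thesis by (auto simp: idx_iff)
    qed
    have "(\<Sum>u<m. id_on (idx m n) (i[k:=u]) (j[k:=u])) = (\<Sum>u<m. if i = j \<and> i \<in> idx m n then 1 else 0)"
      unfolding id_on_def using t by (intro sum.cong refl) (simp only: lessThan_iff)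
    then show ?thesis using True m by (simp add: depolarize_def id_on_def)
  next
    case False
    then show ?thesis using k by (auto simp: depolarize_def id_on_def dest: idx_nth)
  qed
qed

lemma ext_on_site_noise:
  assumes X: "ext_on (idx m n) X" and k: "k < n"
  shows "ext_on (idx m n) (site_noise m g k X)"
  unfolding ext_on_def
proof (intro allI impI)
  fix i j assume ij: "i \<notin> idx m n \<or> j \<notin> idx m n"
  have "depolarize m k X i j = 0" using ext_on_depolarize[OF X k] ij unfolding ext_on_def by blast
  moreover have "X i j = 0" using X ij unfolding ext_on_def by blast
  ultimately show "site_noise m g k X i j = 0" by (simp add: site_noise_def)
qed

lemma herm_on_site_noise:
  assumes X: "herm_on (idx m n) X" and k: "k < n"
  shows "herm_on (idx m n) (site_noise m g k X)"
proof -
  have E: "herm_on (idx m n) (depolarize m k X)" using herm_on_depolarize[OF X k] .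
  show ?thesis
    unfolding herm_on_def
  proof (intro conjI ballI)
    show "ext_on (idx m n) (site_noise m g k X)" using X ext_on_site_noise[of m n X k g] k unfolding herm_on_def by blast
  next
    fix i j assume i: "i \<in> idx m n" and j: "j \<in> idx m n"
    have hx: "X i j = cnj (X j i)" using X i j unfolding herm_on_def by blast
    have he: "depolarize m k X i j = cnj (depolarize m k X j i)" using E i j unfolding herm_on_def by blast
    show "site_noise m g k X i j = cnj (site_noise m g k X j i)" by (simp add: site_noise_def hx he)
  qed
qed

lemma psd_on_site_noise:
  assumes X: "psd_on (idx m n) X" and k: "k < n" and m: "0 < m" and g: "0 \<le> g" "g \<le> 1"
  shows "psd_on (idx m n) (site_noise m g k X)"
  unfolding psd_on_iff_qform
proof (intro conjI allI)
  show "herm_on (idx m n) (site_noise m g k X)" using X k herm_on_site_noise by (auto simp: psd_on_iff_qform)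
next
  fix v
  have a: "0 \<le> Re (qform (idx m n) X v)" using X by (simp add: psd_on_iff_qform)
  have b: "0 \<le> Re (qform (idx m n) (depolarize m k X) v)" using psd_on_depolarize[OF X k m] by (simp add: psd_on_iff_qform)
  have "Re (qform (idx m n) (site_noise m g k X) v) = g * Re (qform (idx m n) X v) + (1 - g) * Re (qform (idx m n) (depolarize m k X) v)"
    unfolding site_noise_def qform_linear by simp
  then show "0 \<le> Re (qform (idx m n) (site_noise m g k X) v)" using a b g by simp
qed

lemma cmod_convex_comb_sq_le:
  fixes x y :: complex and g :: real
  assumes "0 \<le> g" "g \<le> 1"
  shows "(cmod (of_real g * x + of_real (1 - g) * y))\<^sup>2 \<le> g * (cmod x)\<^sup>2 + (1 - g) * (cmod y)\<^sup>2"
proof -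
  have n1: "cmod (complex_of_real (1 - g)) = 1 - g" using assms by (simp only: norm_of_real abs_of_nonneg diff_ge_0_iff_ge)
  have "cmod (of_real g * x + of_real (1 - g) * y) \<le> cmod (of_real g * x) + cmod (of_real (1 - g) * y)"
    by (rule norm_triangle_ineq)
  also have "\<dots> = g * cmod x + (1 - g) * cmod y"
    using assms by (simp only: norm_mult n1) simp
  finally have "cmod (of_real g * x + of_real (1 - g) * y) \<le> g * cmod x + (1 - g) * cmod y" .
  then have "(cmod (of_real g * x + of_real (1 - g) * y))\<^sup>2 \<le> (g * cmod x + (1 - g) * cmod y)\<^sup>2"
    by (intro power_mono) auto
  also have "\<dots> \<le> g * (cmod x)\<^sup>2 + (1 - g) * (cmod y)\<^sup>2"
  proof -
    have "0 \<le> g * (1 - g) * (cmod x - cmod y)\<^sup>2" using assms by simp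
    then show ?thesis by (simp add: power2_eq_square algebra_simps)
  qed
  finally show ?thesis .
qed

lemma hs_sq_site_noise_le:
  assumes k: "k < n" and m: "0 < m" and g: "0 \<le> g" "g \<le> 1"
  shows "hs_sq m n (site_noise m g k X) \<le> hs_sq m n X"
proof -
  have "hs_sq m n (site_noise m g k X) = (\<Sum>i\<in>idx m n. \<Sum>j\<in>idx m n.
     (cmod (of_real g * X i j + of_real (1 - g) * depolarize m k X i j))\<^sup>2)"
    by (simp only: hs_sq_def site_noise_def)
  also have "\<dots> \<le> (\<Sum>i\<in>idx m n. \<Sum>j\<in>idx m n. g * (cmod (X i j))\<^sup>2 + (1 - g) * (cmod (depolarize m k X i j))\<^sup>2)"
    by (intro sum_mono cmod_convex_comb_sq_le[OF g])
  also have "\<dots> = g * hs_sq m n X + (1 - g) * hs_sq m n (depolarize m k X)"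
    by (simp add: hs_sq_def sum.distrib sum_distrib_left)
  finally have "hs_sq m n (site_noise m g k X) \<le> g * hs_sq m n X + (1 - g) * hs_sq m n (depolarize m k X)" .
  also have "\<dots> \<le> g * hs_sq m n X + (1 - g) * hs_sq m n X"
    using hs_sq_depolarize_le[OF k m, of X] g by (intro add_left_mono mult_left_mono) auto
  finally show ?thesis by (simp add: algebra_simps)
qed

lemma site_noise_id: "k < n \<Longrightarrow> 0 < m \<Longrightarrow> site_noise m g k (id_on (idx m n)) = id_on (idx m n)"
  by (simp add: site_noise_def depolarize_id algebra_simps)

lemma herm_on_noise: "herm_on (idx m n) X \<Longrightarrow> s + n' \<le> n \<Longrightarrow> herm_on (idx m n) (noise m g s n' X)"
  by (induction n' arbitrary: s) (auto intro!: herm_on_site_noise)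

lemma psd_on_noise: "psd_on (idx m n) X \<Longrightarrow> s + n' \<le> n \<Longrightarrow> 0 < m \<Longrightarrow> 0 \<le> g \<Longrightarrow> g \<le> 1 \<Longrightarrow>
    psd_on (idx m n) (noise m g s n' X)"
  by (induction n' arbitrary: s) (auto intro!: psd_on_site_noise)

lemma hs_sq_noise_le: "s + n' \<le> n \<Longrightarrow> 0 < m \<Longrightarrow> 0 \<le> g \<Longrightarrow> g \<le> 1 \<Longrightarrow> hs_sq m n (noise m g s n' X) \<le> hs_sq m n X"
proof (induction n' arbitrary: s)
  case 0 then show ?case by simp
next
  case (Suc n')
  have "hs_sq m n (noise m g s (Suc n') X) \<le> hs_sq m n (noise m g (Suc s) n' X)"
    using Suc.prems by (simp add: hs_sq_site_noise_le)
  also have "\<dots> \<le> hs_sq m n X" using Suc.prems by (intro Suc.IH) auto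
  finally show ?case .
qed

lemma noise_id: "s + n' \<le> n \<Longrightarrow> 0 < m \<Longrightarrow> noise m g s n' (id_on (idx m n)) = id_on (idx m n)"
  by (induction n' arbitrary: s) (auto simp: site_noise_id)

section \<open>Fourier coefficients under noise\<close>

lemma std_onb_0: "std_onb m B \<Longrightarrow> c < m \<Longrightarrow> c' < m \<Longrightarrow> B 0 c c' = (if c = c' then 1 else 0)"
  by (simp add: std_onb_def id_on_def)

lemma std_onb_trace:
  assumes B: "std_onb m B" and s: "s < m\<^sup>2" and m: "0 < m"
  shows "(\<Sum>c<m. cnj (B s c c)) = (if s = 0 then of_nat m else 0)"
proof (cases "s = 0")
  case True then show ?thesis using B by (simp add: std_onb_0)
next
  case False
  have all: "\<forall>k<m\<^sup>2. \<forall>l<m\<^sup>2. (1 / of_nat m) * (\<Sum>i<m. \<Sum>j<m. cnj (B k i j) * B l i j)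
                         = (if k = l then 1 else 0)" using B unfolding std_onb_def by blast
  have m2: "0 < m\<^sup>2" using m by simp
  have "(1 / of_nat m) * (\<Sum>i<m. \<Sum>j<m. cnj (B s i j) * B 0 i j) = 0"
    using all[rule_format, OF s m2] False by simp
  moreover have "(\<Sum>i<m. \<Sum>j<m. cnj (B s i j) * B 0 i j) = (\<Sum>i<m. \<Sum>j<m. if j = i then cnj (B s i j) else 0)"
    using B by (intro sum.cong refl) (simp add: std_onb_0)
  ultimately have "(\<Sum>i<m. cnj (B s i i)) = 0" using m by (simp add: sum.delta)
  then show ?thesis using False by simp
qed

definition basis_tensor_off :: "nat \<Rightarrow> (nat \<Rightarrow> nat \<Rightarrow> nat \<Rightarrow> complex) \<Rightarrow> nat list \<Rightarrow> nat \<Rightarrow> nat list \<Rightarrow> nat list \<Rightarrow> complex" where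
  "basis_tensor_off n B \<sigma> k i j = (\<Prod>l\<in>{..<n} - {k}. B (\<sigma> ! l) (i ! l) (j ! l))"

lemma basis_tensor_update:
  assumes "length i = n" "length j = n" "k < n"
  shows "basis_tensor n B \<sigma> (i[k:=c]) (j[k:=c']) = B (\<sigma> ! k) c c' * basis_tensor_off n B \<sigma> k i j"
proof -
  have "basis_tensor n B \<sigma> (i[k:=c]) (j[k:=c']) = B (\<sigma> ! k) (i[k:=c] ! k) (j[k:=c'] ! k) *
      (\<Prod>l\<in>{..<n} - {k}. B (\<sigma> ! l) (i[k:=c] ! l) (j[k:=c'] ! l))"
    unfolding basis_tensor_def using assms(3) by (simp only: prod.remove[OF finite_lessThan lessThan_iff[THEN iffD2, OF assms(3)]])
  also have "(\<Prod>l\<in>{..<n} - {k}. B (\<sigma> ! l) (i[k:=c] ! l) (j[k:=c'] ! l)) = basis_tensor_off n B \<sigma> k i j"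
    unfolding basis_tensor_off_def by (intro prod.cong refl) auto
  finally show ?thesis using assms by simp
qed

lemma basis_inner_depolarize:
  assumes k: "k < n" and m: "0 < m"
  shows "(\<Sum>i\<in>idx m n. \<Sum>j\<in>idx m n. cnj (basis_tensor n B \<sigma> i j) * depolarize m k X i j)
    = (\<Sum>i\<in>idx_zero_at m n k. \<Sum>j\<in>idx_zero_at m n k. (\<Sum>c<m. cnj (B (\<sigma> ! k) c c))
        * cnj (basis_tensor_off n B \<sigma> k i j) * (\<Sum>u<m. X (i[k := u]) (j[k := u])) / of_nat m)"
  unfolding sum_idx_idx_site[OF k m]
proof (intro sum.cong refl)
  fix i j assume "i \<in> idx_zero_at m n k" "j \<in> idx_zero_at m n k"
  moreover from this have "length i = n" "length j = n"
    by (simp_all add: idx_zero_at_length)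
  ultimately have "(\<Sum>c<m. \<Sum>c'<m. cnj (basis_tensor n B \<sigma> (i[k := c]) (j[k := c'])) * depolarize m k X (i[k := c]) (j[k := c']))
      = (\<Sum>c<m. \<Sum>c'<m. if c' = c then cnj (B (\<sigma> ! k) c c) * cnj (basis_tensor_off n B \<sigma> k i j)
          * (\<Sum>u<m. X (i[k := u]) (j[k := u])) / of_nat m else 0)"
    using k by (intro sum.cong refl) (auto simp: depolarize_update basis_tensor_update)
  then show "(\<Sum>c<m. \<Sum>c'<m. cnj (basis_tensor n B \<sigma> (i[k := c]) (j[k := c'])) * depolarize m k X (i[k := c]) (j[k := c']))
      = (\<Sum>c<m. cnj (B (\<sigma> ! k) c c)) * cnj (basis_tensor_off n B \<sigma> k i j) * (\<Sum>u<m. X (i[k := u]) (j[k := u])) / of_nat m"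
    by (simp add: sum_distrib_right sum_divide_distrib)
qed

lemma basis_inner_identity_site:
  assumes B: "std_onb m B" and k: "k < n" and m: "0 < m" and \<sigma>k: "\<sigma> ! k = 0"
  shows "(\<Sum>i\<in>idx m n. \<Sum>j\<in>idx m n. cnj (basis_tensor n B \<sigma> i j) * X i j)
    = (\<Sum>i\<in>idx_zero_at m n k. \<Sum>j\<in>idx_zero_at m n k.
        cnj (basis_tensor_off n B \<sigma> k i j) * (\<Sum>u<m. X (i[k := u]) (j[k := u])))"
  unfolding sum_idx_idx_site[OF k m]
proof (intro sum.cong refl)
  fix i j assume "i \<in> idx_zero_at m n k" "j \<in> idx_zero_at m n k"
  then have "length i = n" "length j = n"
    by (simp_all add: idx_zero_at_length)
  then have "(\<Sum>c<m. \<Sum>c'<m. cnj (basis_tensor n B \<sigma> (i[k := c]) (j[k := c'])) * X (i[k := c]) (j[k := c']))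
      = (\<Sum>c<m. \<Sum>c'<m. if c' = c then cnj (basis_tensor_off n B \<sigma> k i j) * X (i[k := c]) (j[k := c']) else 0)"
    using k \<sigma>k B by (intro sum.cong refl) (auto simp: basis_tensor_update std_onb_0)
  then show "(\<Sum>c<m. \<Sum>c'<m. cnj (basis_tensor n B \<sigma> (i[k := c]) (j[k := c'])) * X (i[k := c]) (j[k := c']))
      = cnj (basis_tensor_off n B \<sigma> k i j) * (\<Sum>u<m. X (i[k := u]) (j[k := u]))"
    by (simp add: sum_distrib_left)
qed

lemma fcoeff_depolarize:
  assumes B: "std_onb m B" and \<sigma>: "\<sigma> \<in> idx (m\<^sup>2) n" and k: "k < n" and m: "0 < m"
  shows "fcoeff m n B (depolarize m k X) \<sigma> = (if \<sigma> ! k = 0 then fcoeff m n B X \<sigma> else 0)"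
  using std_onb_trace[OF B idx_nth[OF \<sigma> k] m] m
  by (simp add: fcoeff_def basis_inner_depolarize[OF k m] basis_inner_identity_site[OF B k m])

lemma fcoeff_linear: "fcoeff m n B (\<lambda>i j. a * X i j + b * Y i j) \<sigma> = a * fcoeff m n B X \<sigma> + b * fcoeff m n B Y \<sigma>"
  by (simp add: fcoeff_def algebra_simps sum.distrib sum_distrib_left)

lemma fcoeff_site_noise:
  assumes B: "std_onb m B" and \<sigma>: "\<sigma> \<in> idx (m\<^sup>2) n" and k: "k < n" and m: "0 < m"
  shows "fcoeff m n B (site_noise m g k X) \<sigma> = (if \<sigma> ! k = 0 then 1 else of_real g) * fcoeff m n B X \<sigma>"
  unfolding site_noise_def fcoeff_linear fcoeff_depolarize[OF assms] by (simp add: algebra_simps)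

lemma fcoeff_noise_sites:
  assumes B: "std_onb m B" and \<sigma>: "\<sigma> \<in> idx (m\<^sup>2) n" and m: "0 < m"
  shows "s + n' \<le> n \<Longrightarrow> fcoeff m n B (noise m g s n' X) \<sigma> =
     (\<Prod>k\<in>{s..<s+n'}. if \<sigma> ! k = 0 then 1 else of_real g) * fcoeff m n B X \<sigma>"
proof (induction n' arbitrary: s)
  case 0 then show ?case by simp
next
  case (Suc n')
  have "fcoeff m n B (noise m g s (Suc n') X) \<sigma> = (if \<sigma> ! s = 0 then 1 else of_real g) *
      fcoeff m n B (noise m g (Suc s) n' X) \<sigma>"
    using Suc.prems by (simp add: fcoeff_site_noise[OF B \<sigma> _ m])
  also have "\<dots> = (if \<sigma> ! s = 0 then 1 else of_real g) *
      ((\<Prod>k\<in>{Suc s..<Suc s+n'}. if \<sigma> ! k = 0 then 1 else of_real g) * fcoeff m n B X \<sigma>)"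
    using Suc.prems by (subst Suc.IH) auto
  also have "\<dots> = (\<Prod>k\<in>{s..<s+Suc n'}. if \<sigma> ! k = 0 then 1 else of_real g) * fcoeff m n B X \<sigma>"
    by (simp add: prod.atLeast_Suc_lessThan)
  finally show ?case .
qed

lemma weight_Cons: "weight (a # \<sigma>) = (if a = 0 then 0 else 1) + weight \<sigma>"
  by (simp add: weight_def)

lemma prod_if_zero_eq_power_weight: "(\<Prod>k<length \<sigma>. if \<sigma> ! k = 0 then 1 else c) = c ^ weight \<sigma>"
proof (induction \<sigma>)
  case Nil then show ?case by (simp add: weight_def)
next
  case (Cons a \<sigma>)
  show ?case
    by (simp only: length_Cons prod.lessThan_Suc_shift nth_Cons_0 nth_Cons_Suc Cons weight_Cons power_add) simp
qed

lemma fcoeff_noise: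
  assumes B: "std_onb m B" and \<sigma>: "\<sigma> \<in> idx (m\<^sup>2) n" and m: "0 < m"
  shows "fcoeff m n B (noise m g 0 n X) \<sigma> = of_real g ^ weight \<sigma> * fcoeff m n B X \<sigma>"
proof -
  have l: "length \<sigma> = n" using \<sigma> by (rule idx_length)
  show ?thesis
    using fcoeff_noise_sites[OF B \<sigma> m, of 0 n g X] prod_if_zero_eq_power_weight[of \<sigma> "complex_of_real g"] l
    by (simp add: atLeast0LessThan)
qed

lemma prod_if_const: "(\<Prod>k<n. if P k then c else 0) = (if \<forall>k<n. P k then c ^ n else (0::'a::comm_semiring_1))"
  by (induction n) (auto simp: less_Suc_eq mult.commute)

lemma basis_tensor_orthogonal:
  assumes B: "std_onb m B" and m: "0 < m" and \<sigma>: "\<sigma> \<in> idx (m\<^sup>2) n" and \<tau>: "\<tau> \<in> idx (m\<^sup>2) n"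
  shows "(\<Sum>i\<in>idx m n. \<Sum>j\<in>idx m n. cnj (basis_tensor n B \<sigma> i j) * basis_tensor n B \<tau> i j)
     = (if \<sigma> = \<tau> then of_nat m ^ n else 0)"
proof -
  have all: "\<forall>k<m\<^sup>2. \<forall>l<m\<^sup>2. (1 / of_nat m) * (\<Sum>i<m. \<Sum>j<m. cnj (B k i j) * B l i j)
                         = (if k = l then 1 else 0)" using B unfolding std_onb_def by blast
  have f: "(\<Sum>u<m. \<Sum>v<m. cnj (B (\<sigma> ! k) u v) * B (\<tau> ! k) u v) = (if \<sigma> ! k = \<tau> ! k then of_nat m else 0)"
    if k: "k < n" for k
  proof -
    have "(1 / of_nat m) * (\<Sum>u<m. \<Sum>v<m. cnj (B (\<sigma> ! k) u v) * B (\<tau> ! k) u v) = (if \<sigma> ! k = \<tau> ! k then 1 else 0)"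
      using all idx_nth[OF \<sigma> k] idx_nth[OF \<tau> k] by blast
    then show ?thesis using m by (auto simp: field_simps split: if_splits)
  qed
  have "(\<Sum>i\<in>idx m n. \<Sum>j\<in>idx m n. cnj (basis_tensor n B \<sigma> i j) * basis_tensor n B \<tau> i j)
      = (\<Sum>i\<in>idx m n. \<Sum>j\<in>idx m n. \<Prod>k<n. cnj (B (\<sigma> ! k) (i ! k) (j ! k)) * B (\<tau> ! k) (i ! k) (j ! k))"
    unfolding basis_tensor_def by (simp add: prod.distrib)
  also have "\<dots> = (\<Prod>k<n. \<Sum>u<m. \<Sum>v<m. cnj (B (\<sigma> ! k) u v) * B (\<tau> ! k) u v)"
    by (rule sum_idx_idx_prod)
  also have "\<dots> = (\<Prod>k<n. if \<sigma> ! k = \<tau> ! k then of_nat m else 0)"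
    by (intro prod.cong refl) (simp add: f)
  also have "\<dots> = (if \<sigma> = \<tau> then of_nat m ^ n else 0)"
  proof -
    have "(\<forall>k<n. \<sigma> ! k = \<tau> ! k) = (\<sigma> = \<tau>)"
      using idx_length[OF \<sigma>] idx_length[OF \<tau>] by (auto simp: list_eq_iff_nth_eq)
    then show ?thesis by (simp add: prod_if_const)
  qed
  finally show ?thesis .
qed

lemma hs_sq_basis_comb:
  assumes B: "std_onb m B" and m: "0 < m" and H: "H \<subseteq> idx (m\<^sup>2) n"
  shows "hs_sq m n (\<lambda>i j. \<Sum>\<sigma>\<in>H. a \<sigma> * basis_tensor n B \<sigma> i j) = real m ^ n * (\<Sum>\<sigma>\<in>H. (cmod (a \<sigma>))\<^sup>2)"
proof -
  have finH: "finite H" using H finite_subset finite_idx by blast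
  have "complex_of_real (hs_sq m n (\<lambda>i j. \<Sum>\<sigma>\<in>H. a \<sigma> * basis_tensor n B \<sigma> i j))
    = (\<Sum>i\<in>idx m n. \<Sum>j\<in>idx m n. \<Sum>\<sigma>\<in>H. \<Sum>\<tau>\<in>H. a \<sigma> * (cnj (a \<tau>) *
        (basis_tensor n B \<sigma> i j * cnj (basis_tensor n B \<tau> i j))))"
    unfolding hs_sq_def of_real_sum complex_norm_square
    by (simp add: sum_product ac_simps)
  also have "\<dots> = (\<Sum>\<sigma>\<in>H. \<Sum>\<tau>\<in>H. a \<sigma> * cnj (a \<tau>) *
        (\<Sum>i\<in>idx m n. \<Sum>j\<in>idx m n. cnj (basis_tensor n B \<tau> i j) * basis_tensor n B \<sigma> i j))"
    by (simp add: sum_distrib_left sum.swap[of _ "idx m n" H] ac_simps)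
  also have "\<dots> = (\<Sum>\<sigma>\<in>H. \<Sum>\<tau>\<in>H. if \<tau> = \<sigma> then a \<sigma> * cnj (a \<sigma>) * of_nat m ^ n else 0)"
  proof (intro sum.cong refl)
    fix \<sigma> \<tau> assume "\<sigma> \<in> H" "\<tau> \<in> H"
    then have "\<sigma> \<in> idx (m\<^sup>2) n" "\<tau> \<in> idx (m\<^sup>2) n" using H by auto
    then show "a \<sigma> * cnj (a \<tau>) *
        (\<Sum>i\<in>idx m n. \<Sum>j\<in>idx m n. cnj (basis_tensor n B \<tau> i j) * basis_tensor n B \<sigma> i j)
      = (if \<tau> = \<sigma> then a \<sigma> * cnj (a \<sigma>) * of_nat m ^ n else 0)"
      by (simp add: basis_tensor_orthogonal[OF B m])
  qed
  also have "\<dots> = (\<Sum>\<sigma>\<in>H. a \<sigma> * cnj (a \<sigma>) * of_nat m ^ n)"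
    using finH by (simp add: sum.delta)
  also have "\<dots> = (\<Sum>\<sigma>\<in>H. complex_of_real (real m ^ n * (cmod (a \<sigma>))\<^sup>2))"
    by (intro sum.cong refl) (simp only: of_real_mult complex_norm_square, simp add: ac_simps)
  also have "\<dots> = complex_of_real (real m ^ n * (\<Sum>\<sigma>\<in>H. (cmod (a \<sigma>))\<^sup>2))"
    by (simp only: of_real_sum sum_distrib_left)
  finally show ?thesis by (simp only: of_real_eq_iff)
qed

lemma inner_basis_tensor_eq_fcoeff:
  "0 < m \<Longrightarrow> (\<Sum>i\<in>idx m n. \<Sum>j\<in>idx m n. X i j * cnj (basis_tensor n B \<sigma> i j)) = of_nat m ^ n * fcoeff m n B X \<sigma>"
  by (simp add: fcoeff_def mult.commute)

lemma bessel_fcoeff: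
  assumes B: "std_onb m B" and m: "0 < m" and H: "H \<subseteq> idx (m\<^sup>2) n"
  shows "real m ^ n * (\<Sum>\<sigma>\<in>H. (cmod (fcoeff m n B X \<sigma>))\<^sup>2) \<le> hs_sq m n X"
proof -
  have finH: "finite H" using H finite_subset finite_idx by blast
  define c where "c \<sigma> = fcoeff m n B X \<sigma>" for \<sigma>
  define S where "S i j = (\<Sum>\<sigma>\<in>H. c \<sigma> * basis_tensor n B \<sigma> i j)" for i j
  define Q where "Q = (\<Sum>\<sigma>\<in>H. (cmod (c \<sigma>))\<^sup>2)"
  have NS: "hs_sq m n S = real m ^ n * Q" unfolding S_def Q_def by (rule hs_sq_basis_comb[OF B m H])
  have cross: "(\<Sum>i\<in>idx m n. \<Sum>j\<in>idx m n. X i j * cnj (S i j)) = complex_of_real (real m ^ n * Q)"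
  proof -
    have "(\<Sum>i\<in>idx m n. \<Sum>j\<in>idx m n. X i j * cnj (S i j))
        = (\<Sum>\<sigma>\<in>H. cnj (c \<sigma>) * (\<Sum>i\<in>idx m n. \<Sum>j\<in>idx m n. X i j * cnj (basis_tensor n B \<sigma> i j)))"
      unfolding S_def by (simp add: sum_distrib_left sum.swap[of _ "idx m n" H] ac_simps)
    also have "\<dots> = (\<Sum>\<sigma>\<in>H. of_nat m ^ n * (cnj (c \<sigma>) * c \<sigma>))"
      unfolding c_def using m by (simp only: inner_basis_tensor_eq_fcoeff[OF m]) (simp add: ac_simps)
    also have "\<dots> = complex_of_real (real m ^ n * Q)"
      unfolding Q_def by (simp only: of_real_mult of_real_sum complex_norm_square sum_distrib_left) (simp add: ac_simps)
    finally show ?thesis .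
  qed
  have "0 \<le> (\<Sum>i\<in>idx m n. \<Sum>j\<in>idx m n. (cmod (X i j - S i j))\<^sup>2)" by (simp add: sum_nonneg)
  also have "\<dots> = hs_sq m n X - 2 * Re (\<Sum>i\<in>idx m n. \<Sum>j\<in>idx m n. X i j * cnj (S i j)) + hs_sq m n S"
    unfolding hs_sq_def cmod_diff_sq by (simp add: sum.distrib sum_subtractf Re_sum sum_distrib_left)
  also have "\<dots> = hs_sq m n X - real m ^ n * Q" unfolding cross NS by simp
  finally show ?thesis unfolding Q_def c_def by simp
qed

lemma norm2'_sq: "(norm2' m n X)\<^sup>2 = hs_sq m n X / real m ^ n"
  unfolding norm2'_def hs_sq_def by (simp add: sum_nonneg)

lemma high_part_noise_le:
  assumes B: "std_onb m B" and m: "0 < m" and g: "0 \<le> g"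
    and hw: "\<And>\<sigma>. \<sigma> \<in> idx (m\<^sup>2) n \<Longrightarrow> d < real (weight \<sigma>) \<Longrightarrow> g ^ (2 * weight \<sigma>) \<le> \<delta>"
    and d0: "0 \<le> \<delta>"
  shows "(norm2' m n (high_part m n B d (noise m g 0 n X)))\<^sup>2 \<le> \<delta> * (hs_sq m n X / real m ^ n)"
proof -
  define H where "H = {\<sigma> \<in> idx (m\<^sup>2) n. d < real (weight \<sigma>)}"
  have H: "H \<subseteq> idx (m\<^sup>2) n" unfolding H_def by auto
  have hp: "high_part m n B d (noise m g 0 n X) = (\<lambda>i j. \<Sum>\<sigma>\<in>H. (of_real g ^ weight \<sigma> * fcoeff m n B X \<sigma>) * basis_tensor n B \<sigma> i j)"
    unfolding high_part_def H_def using B m by (auto simp: fcoeff_noise intro!: ext sum.cong)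
  have mp: "0 < real m ^ n" using m by simp
  have "(norm2' m n (high_part m n B d (noise m g 0 n X)))\<^sup>2 = (\<Sum>\<sigma>\<in>H. (cmod (of_real g ^ weight \<sigma> * fcoeff m n B X \<sigma>))\<^sup>2)"
    unfolding norm2'_sq hp hs_sq_basis_comb[OF B m H] using mp by simp
  also have "\<dots> = (\<Sum>\<sigma>\<in>H. g ^ (2 * weight \<sigma>) * (cmod (fcoeff m n B X \<sigma>))\<^sup>2)"
    using g by (simp add: norm_mult norm_power power_mult_distrib power_mult[symmetric] mult.commute[of 2])
  also have "\<dots> \<le> (\<Sum>\<sigma>\<in>H. \<delta> * (cmod (fcoeff m n B X \<sigma>))\<^sup>2)"
    by (intro sum_mono mult_right_mono) (auto simp: H_def hw)
  also have "\<dots> = \<delta> * (\<Sum>\<sigma>\<in>H. (cmod (fcoeff m n B X \<sigma>))\<^sup>2)" by (simp add: sum_distrib_left)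
  also have "\<dots> \<le> \<delta> * (hs_sq m n X / real m ^ n)"
    using bessel_fcoeff[OF B m H, of X] mp d0 by (intro mult_left_mono) (auto simp: pos_le_divide_eq ac_simps)
  finally show ?thesis .
qed

section \<open>Operators between 0 and the identity\<close>

lemma qform_id_column:
  assumes "finite S" "k \<in> S"
  shows "qform S A (\<lambda>i. id_on S i k) = A k k"
  using assms unfolding qform_def
  by (simp add: id_on_def if_distrib[of cnj] if_distrib[of "\<lambda>x. x * _"] if_distrib[of "\<lambda>x. _ * x"]
      sum.delta' cong: if_cong)

lemma psd_on_diag_nonneg:
  assumes "finite S" "psd_on S A" "k \<in> S"
  shows "0 \<le> Re (A k k)"
proof -
  have "0 \<le> Re (qform S A (\<lambda>i. id_on S i k))"
    using assms(2) psd_on_iff_qform by blast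
  then show ?thesis
    by (simp add: qform_id_column[OF assms(1,3)])
qed

lemma qform_complement_column:
  fixes P :: "'a \<Rightarrow> 'a \<Rightarrow> complex"
  assumes fin: "finite S" and k: "k \<in> S"
  defines "Q \<equiv> \<lambda>i j. id_on S i j - P i j"
  shows "qform S Q (\<lambda>i. P i k) + qform S P (\<lambda>i. Q i k) = P k k - (\<Sum>j\<in>S. P k j * P j k)"
proof -
  let ?I = "id_on S"
  have expand: "cnj (P i k) * Q i j * P j k + cnj (Q i k) * P i j * Q j k
     = cnj (P i k) * ?I i j * P j k + ?I i k * P i j * ?I j k - ?I i k * P i j * P j k - cnj (P i k) * P i j * ?I j k"
    for i j
    unfolding Q_def by (simp add: id_on_def algebra_simps)
  have "qform S Q (\<lambda>i. P i k) + qform S P (\<lambda>i. Q i k)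
      = (\<Sum>i\<in>S. \<Sum>j\<in>S. cnj (P i k) * Q i j * P j k + cnj (Q i k) * P i j * Q j k)"
    unfolding qform_def by (simp add: sum.distrib)
  also have "\<dots> = (\<Sum>i\<in>S. \<Sum>j\<in>S. cnj (P i k) * ?I i j * P j k) + (\<Sum>i\<in>S. \<Sum>j\<in>S. ?I i k * P i j * ?I j k)
      - (\<Sum>i\<in>S. \<Sum>j\<in>S. ?I i k * P i j * P j k) - (\<Sum>i\<in>S. \<Sum>j\<in>S. cnj (P i k) * P i j * ?I j k)"
    unfolding expand by (simp add: sum.distrib sum_subtractf)
  also have "(\<Sum>i\<in>S. \<Sum>j\<in>S. ?I i k * P i j * P j k) = (\<Sum>i\<in>S. ?I i k * (\<Sum>j\<in>S. P i j * P j k))"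
    by (simp add: sum_distrib_left mult.assoc)
  also have "\<dots> = (\<Sum>j\<in>S. P k j * P j k)"
    using k fin by (simp add: id_on_def if_distrib[of "\<lambda>x. x * _"] sum.delta' cong: if_cong)
  moreover have "(\<Sum>i\<in>S. \<Sum>j\<in>S. cnj (P i k) * ?I i j * P j k) = (\<Sum>i\<in>S. cnj (P i k) * P i k)"
    and "(\<Sum>i\<in>S. \<Sum>j\<in>S. ?I i k * P i j * ?I j k) = P k k"
    and "(\<Sum>i\<in>S. \<Sum>j\<in>S. cnj (P i k) * P i j * ?I j k) = (\<Sum>i\<in>S. cnj (P i k) * P i k)"
    using k fin by (simp_all add: id_on_def if_distrib[of "\<lambda>x. _ * x"] if_distrib[of "\<lambda>x. x * _"]
        sum.delta sum.delta' cong: if_cong)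
  ultimately show ?thesis
    by simp
qed

text \<open>With \<open>Q = id - P\<close> this is \<open>Tr(P Q P) + Tr(Q P Q) = Tr P - Tr P\<^sup>2\<close>.\<close>
lemma qform_columns_complement:
  fixes P :: "'a \<Rightarrow> 'a \<Rightarrow> complex"
  assumes fin: "finite S" and herm: "herm_on S P"
  defines "Q \<equiv> \<lambda>i j. id_on S i j - P i j"
  shows "(\<Sum>k\<in>S. qform S Q (\<lambda>i. P i k)) + (\<Sum>k\<in>S. qform S P (\<lambda>i. Q i k))
    = (\<Sum>k\<in>S. P k k) - complex_of_real (\<Sum>k\<in>S. \<Sum>j\<in>S. (cmod (P k j))\<^sup>2)"
proof -
  have "(\<Sum>k\<in>S. qform S Q (\<lambda>i. P i k)) + (\<Sum>k\<in>S. qform S P (\<lambda>i. Q i k))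
      = (\<Sum>k\<in>S. P k k - (\<Sum>j\<in>S. P k j * P j k))"
    unfolding Q_def sum.distrib[symmetric] by (intro sum.cong refl qform_complement_column[OF fin])
  also have "\<dots> = (\<Sum>k\<in>S. P k k - (\<Sum>j\<in>S. complex_of_real ((cmod (P k j))\<^sup>2)))"
  proof (intro sum.cong refl arg_cong2[where f = "(-)"])
    fix k j assume "k \<in> S" "j \<in> S"
    then have "P j k = cnj (P k j)"
      using herm unfolding herm_on_def by blast
    then show "P k j * P j k = complex_of_real ((cmod (P k j))\<^sup>2)"
      by (simp only: complex_norm_square)
  qed
  finally show ?thesis
    by (simp only: sum_subtractf of_real_sum)
qed

lemma between01_hs_le_card:
  fixes P :: "'a \<Rightarrow> 'a \<Rightarrow> complex"
  assumes fin: "finite S" and P: "between01 S P"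
  shows "(\<Sum>i\<in>S. \<Sum>j\<in>S. (cmod (P i j))\<^sup>2) \<le> real (card S)"
proof -
  define Q where "Q = (\<lambda>i j. id_on S i j - P i j)"
  have pP: "psd_on S P" and pQ: "psd_on S Q"
    using P unfolding between01_def Q_def by auto
  then have "herm_on S P"
    by (simp add: psd_on_def)
  from arg_cong[OF qform_columns_complement[OF fin this], of Re]
  have "(\<Sum>k\<in>S. \<Sum>j\<in>S. (cmod (P k j))\<^sup>2)
      = Re (\<Sum>k\<in>S. P k k) - Re (\<Sum>k\<in>S. qform S Q (\<lambda>i. P i k)) - Re (\<Sum>k\<in>S. qform S P (\<lambda>i. Q i k))"
    unfolding Q_def by simp
  also have "\<dots> \<le> Re (\<Sum>k\<in>S. P k k)"
  proof -
    have "0 \<le> Re (qform S Q (\<lambda>i. P i k))" "0 \<le> Re (qform S P (\<lambda>i. Q i k))" for k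
      using pP pQ by (simp_all add: psd_on_iff_qform)
    then have "0 \<le> (\<Sum>k\<in>S. Re (qform S Q (\<lambda>i. P i k)))" "0 \<le> (\<Sum>k\<in>S. Re (qform S P (\<lambda>i. Q i k)))"
      by (simp_all add: sum_nonneg)
    then show ?thesis
      unfolding Re_sum by linarith
  qed
  also have "\<dots> \<le> (\<Sum>k\<in>S. 1)"
    unfolding Re_sum using psd_on_diag_nonneg[OF fin pQ] by (intro sum_mono) (simp add: Q_def id_on_def)
  finally show ?thesis
    by simp
qed

lemma between01_hs_sq_le: "between01 (idx m n) P \<Longrightarrow> hs_sq m n P \<le> real m ^ n"
  using between01_hs_le_card[OF finite_idx] by (simp add: hs_sq_def card_idx)

section \<open>Choice of the noise rate\<close>

lemma power_le_exp_neg: "0 \<le> (\<rho>::real) \<Longrightarrow> \<rho> ^ k \<le> exp (- (real k * (1 - \<rho>)))"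
proof -
  assume \<rho>: "0 \<le> \<rho>"
  have "\<rho> ^ k \<le> exp (\<rho> - 1) ^ k"
    using \<rho> exp_ge_add_one_self[of "\<rho> - 1"] by (intro power_mono) auto
  also have "\<dots> = exp (- (real k * (1 - \<rho>)))"
    by (simp add: exp_of_nat_mult[symmetric] algebra_simps)
  finally show ?thesis .
qed

context
  fixes \<rho> \<delta> t :: real
  assumes \<rho>: "0 \<le> \<rho>" "\<rho> < 1" and \<delta>: "0 < \<delta>" "\<delta> < 1"
    and \<delta>\<rho>: "\<delta> < \<rho>" and t_def: "t = \<delta> * (1 - \<rho>) / ln (1 / \<delta>)"
begin

lemma ln_inverse_pos: "0 < ln (1 / \<delta>)"
  using \<delta> by simp

lemma t_nonneg: "0 \<le> t"
  using \<rho> \<delta> ln_inverse_pos by (simp add: t_def)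

lemma t_le_one: "t \<le> 1"
proof -
  have "1 - \<rho> \<le> ln (1 / \<delta>)"
    using ln_le_minus_one[of \<delta>] \<delta> \<delta>\<rho> by (simp add: ln_div)
  then have "t \<le> \<delta>"
    using \<rho> \<delta> by (simp add: t_def divide_le_eq mult_left_le)
  then show ?thesis
    using \<delta> by simp
qed

text \<open>Levels \<open>k \<ge> ln(1/\<delta>)/(1-\<rho>)\<close> are small because of \<open>\<rho>\<^sup>k\<close>, lower ones because \<open>1 - (1-t)\<^sup>k \<le> k t\<close>.\<close>
lemma noise_level_loss_le: "\<bar>(1 - t) ^ k - 1\<bar> * \<rho> ^ k \<le> \<delta>"
proof -
  have "0 \<le> (1 - t) ^ k" "(1 - t) ^ k \<le> 1"
    using t_le_one t_nonneg by (simp_all add: power_le_one)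
  then have abs_eq: "\<bar>(1 - t) ^ k - 1\<bar> = 1 - (1 - t) ^ k" "1 - (1 - t) ^ k \<le> 1"
    by simp_all
  have \<rho>k: "0 \<le> \<rho> ^ k" "\<rho> ^ k \<le> 1"
    using \<rho> by (simp_all add: power_le_one)
  show ?thesis
  proof (cases "ln (1 / \<delta>) \<le> real k * (1 - \<rho>)")
    case True
    have "\<rho> ^ k \<le> exp (- ln (1 / \<delta>))"
      using power_le_exp_neg[OF \<rho>(1), of k] True by (simp add: order_trans)
    also have "\<dots> = \<delta>"
      using \<delta> by (simp add: ln_div)
    finally show ?thesis
      unfolding abs_eq using abs_eq(2) \<rho>k by (metis mult_left_le_one_le order_trans diff_ge_0_iff_ge
          \<open>(1 - t) ^ k \<le> 1\<close>)
  next
    case False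
    have "1 - (1 - t) ^ k \<le> real k * t"
      using Bernoulli_inequality[of "- t" k] t_le_one by simp
    also have "\<dots> \<le> ln (1 / \<delta>) / (1 - \<rho>) * t"
      using False \<rho> t_nonneg by (intro mult_right_mono) (auto simp: field_simps)
    also have "\<dots> = \<delta>"
      using \<rho> ln_inverse_pos by (simp add: t_def field_simps)
    finally show ?thesis
      unfolding abs_eq using \<rho>k \<delta> by (metis mult_right_le_one_le order_trans abs_eq(2) abs_ge_zero abs_eq(1))
  qed
qed

lemma noise_high_degree_le:
  assumes "2 * (ln (1 / \<delta>))\<^sup>2 / ((1 - \<rho>) * \<delta>) < real w"
  shows "(1 - t) ^ w \<le> \<delta>"
proof -
  have "(1 - t) ^ w \<le> exp (- t) ^ w"
    using t_le_one exp_ge_add_one_self[of "- t"] by (intro power_mono) auto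
  also have "\<dots> = exp (- (t * real w))"
    by (simp add: exp_of_nat_mult[symmetric] algebra_simps)
  also have "\<dots> \<le> exp (- ln (1 / \<delta>))"
  proof -
    have "t * (2 * (ln (1 / \<delta>))\<^sup>2 / ((1 - \<rho>) * \<delta>)) = 2 * ln (1 / \<delta>)"
      using ln_inverse_pos \<rho> \<delta> by (simp add: t_def field_simps power2_eq_square)
    moreover have "t * (2 * (ln (1 / \<delta>))\<^sup>2 / ((1 - \<rho>) * \<delta>)) \<le> t * real w"
      using assms t_nonneg by (intro mult_left_mono) auto
    ultimately have "2 * ln (1 / \<delta>) \<le> t * real w"
      by simp
    then show ?thesis
      using ln_inverse_pos by simp
  qed
  also have "\<dots> = \<delta>"
    using \<delta> by (simp add: ln_div)
  finally show ?thesis .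
qed

end

text \<open>For \<open>\<rho> \<le> \<delta>\<close> already \<open>g = 0\<close>, i.e. \<open>P \<mapsto> tr P \<cdot> id/m\<^sup>n\<close>, does the job.\<close>
lemma noise_rate_exists:
  fixes \<rho> \<delta> :: real
  assumes \<rho>: "0 \<le> \<rho>" "\<rho> < 1" and \<delta>: "0 < \<delta>" "\<delta> < 1"
  obtains g where "0 \<le> g" "g \<le> 1" "\<And>k. \<bar>g ^ (2 * k) - 1\<bar> * \<rho> ^ k \<le> \<delta>"
    "\<And>w. 2 * (ln (1 / \<delta>))\<^sup>2 / ((1 - \<rho>) * \<delta>) < real w \<Longrightarrow> g ^ (2 * w) \<le> \<delta>"
proof (cases "\<rho> \<le> \<delta>")
  case True
  have "\<bar>0 ^ (2 * k) - 1\<bar> * \<rho> ^ k \<le> \<delta>" for k :: nat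
    using \<rho> \<delta> True power_decreasing[of 1 k \<rho>] by (cases k) auto
  moreover have "(0::real) ^ (2 * w) \<le> \<delta>" if "2 * (ln (1 / \<delta>))\<^sup>2 / ((1 - \<rho>) * \<delta>) < real w" for w
  proof -
    have "0 \<le> 2 * (ln (1 / \<delta>))\<^sup>2 / ((1 - \<rho>) * \<delta>)"
      using \<rho> \<delta> by simp
    then show ?thesis
      using that \<delta> by (cases w) auto
  qed
  ultimately show ?thesis
    using that[of 0] by simp
next
  case False
  then have \<delta>\<rho>: "\<delta> < \<rho>"
    by simp
  define t where "t = \<delta> * (1 - \<rho>) / ln (1 / \<delta>)"
  note t1 = t_le_one[OF \<rho> \<delta> \<delta>\<rho> t_def] and t0 = t_nonneg[OF \<rho> \<delta> \<delta>\<rho> t_def]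
  have g_pow: "sqrt (1 - t) ^ (2 * k) = (1 - t) ^ k" for k
    using t1 by (simp add: power_mult)
  show ?thesis
  proof (rule that[of "sqrt (1 - t)"])
    show "0 \<le> sqrt (1 - t)" "sqrt (1 - t) \<le> 1"
      using t0 t1 by simp_all
    show "\<bar>sqrt (1 - t) ^ (2 * k) - 1\<bar> * \<rho> ^ k \<le> \<delta>" for k
      unfolding g_pow using noise_level_loss_le[OF \<rho> \<delta> \<delta>\<rho> t_def] .
    show "sqrt (1 - t) ^ (2 * w) \<le> \<delta>" if "2 * (ln (1 / \<delta>))\<^sup>2 / ((1 - \<rho>) * \<delta>) < real w" for w
      unfolding g_pow using noise_high_degree_le[OF \<rho> \<delta> \<delta>\<rho> t_def that] .
  qed
qed

lemma noise_linear_unital: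
  assumes "0 < m"
  shows "linear_unital m n (noise m g 0 n)"
  unfolding linear_unital_def
proof (intro conjI allI impI)
  show "herm_on (idx m n) (noise m g 0 n X)" if "herm_on (idx m n) X" for X
    using that by (rule herm_on_noise) simp
  show "noise m g 0 n (\<lambda>i j. of_real a * X i j + of_real b * Y i j)
      = (\<lambda>i j. of_real a * noise m g 0 n X i j + of_real b * noise m g 0 n Y i j)" for X Y and a b :: real
    using noise_linear[of m g 0 n "of_real a" X "\<lambda>i j. of_real b * Y i j"]
      noise_linear[of m g 0 n "of_real b" Y "\<lambda>i j. 0"] by (simp add: noise_zero)
  show "noise m g 0 n (id_on (idx m n)) = id_on (idx m n)"
    using assms by (simp add: noise_id)
qed

lemma id_minus_noise:
  assumes "0 < m"
  shows "(\<lambda>i j. id_on (idx m n) i j - noise m g 0 n P i j) = noise m g 0 n (\<lambda>i j. id_on (idx m n) i j - P i j)"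
  using noise_linear[of m g 0 n "-1" P "id_on (idx m n)"] noise_id[of 0 n n m g] assms by simp

lemma between01_noise:
  assumes "0 < m" "0 \<le> g" "g \<le> 1" "between01 (idx m n) P"
  shows "between01 (idx m n) (noise m g 0 n P)"
  using assms unfolding between01_def id_minus_noise[OF assms(1)] by (auto intro: psd_on_noise)

lemma norm2'_noise_le:
  assumes "0 < m" "0 \<le> g" "g \<le> 1"
  shows "norm2' m n (noise m g 0 n P) \<le> norm2' m n P"
  using hs_sq_noise_le[of 0 n n m g P] assms
  by (simp add: norm2'_def hs_sq_def[symmetric] divide_right_mono)

lemma corr_noise_diff_le:
  assumes sb: "centered_corr_bound m \<psi> \<rho>" and \<rho>: "0 \<le> \<rho>" and m: "0 < m" and mg: "uniform_marginals m \<psi>"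
    and g: "\<And>k. \<bar>g ^ (2 * k) - 1\<bar> * \<rho> ^ k \<le> \<delta>"
    and P: "between01 (idx m n) P" and Q: "between01 (idx m n) Q"
  shows "cmod (corr m n \<psi> (noise m g 0 n P) (noise m g 0 n Q) - corr m n \<psi> P Q) \<le> \<delta>"
proof -
  have \<delta>: "0 \<le> \<delta>"
    using g[of 0] by simp
  have "corr m n \<psi> (noise m g 0 n P) (noise m g 0 n Q) - corr m n \<psi> P Q
      = level_form m \<psi> n (\<lambda>k. (-1) * 1 + g ^ (2 * k)) P Q"
    unfolding level_form_weight_linear corr_noise[OF mg m] by (simp add: corr_eq_level_form[of m n \<psi> P Q])
  then have "cmod (corr m n \<psi> (noise m g 0 n P) (noise m g 0 n Q) - corr m n \<psi> P Q)
      \<le> \<delta> * sqrt (hs_sq m n P) * sqrt (hs_sq m n Q) / real m ^ n"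
    using level_form_bound[OF sb \<rho> m mg, of "\<lambda>k. (-1) * 1 + g ^ (2 * k)" \<delta> n P Q] g by simp
  also have "\<dots> \<le> \<delta> * sqrt (real m ^ n) * sqrt (real m ^ n) / real m ^ n"
    using between01_hs_sq_le[OF P] between01_hs_sq_le[OF Q] \<delta>
    by (intro divide_right_mono mult_mono mult_left_mono real_sqrt_le_mono) (auto simp: hs_sq_nonneg)
  also have "\<dots> = \<delta>"
    using m by (simp add: mult.assoc)
  finally show ?thesis .
qed

lemma high_part_noise_between01:
  assumes "std_onb m B" "0 < m" "0 \<le> g" "0 < \<delta>" "between01 (idx m n) P"
    and "\<And>w. d < real w \<Longrightarrow> g ^ (2 * w) \<le> \<delta>"
  shows "(norm2' m n (high_part m n B d (noise m g 0 n P)))\<^sup>2 \<le> \<delta>"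
proof -
  have "(norm2' m n (high_part m n B d (noise m g 0 n P)))\<^sup>2 \<le> \<delta> * (hs_sq m n P / real m ^ n)"
    using assms by (intro high_part_noise_le) auto
  also have "\<dots> \<le> \<delta>"
    using between01_hs_sq_le[OF assms(5)] assms(2,4) by (simp add: mult_left_le divide_le_eq)
  finally show ?thesis .
qed

theorem lemma6p1:
  shows "\<exists>C>0. \<forall>(\<rho>::real) (\<delta>::real) (n::nat) (m::nat) \<psi>.
    0 \<le> \<rho> \<longrightarrow> \<rho> < 1 \<longrightarrow> 0 < \<delta> \<longrightarrow> \<delta> < 1 \<longrightarrow> 0 < n \<longrightarrow> 1 < m \<longrightarrow>
    nme_state m \<psi> \<longrightarrow> maxcorr m \<psi> = \<rho> \<longrightarrow>
    (let d = 2 * (ln (1 / \<delta>))\<^sup>2 / (C * (1 - \<rho>) * \<delta>) in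
     \<exists>f. linear_unital m n f \<and>
       (\<forall>P Q. between01 (idx m n) P \<longrightarrow> between01 (idx m n) Q \<longrightarrow>
          between01 (idx m n) (f P) \<and> between01 (idx m n) (f Q) \<and>
          norm2' m n (f P) \<le> norm2' m n P \<and> norm2' m n (f Q) \<le> norm2' m n Q \<and>
          cmod (corr m n \<psi> (f P) (f Q) - corr m n \<psi> P Q) \<le> \<delta> \<and>
          (\<forall>B. std_onb m B \<longrightarrow>
             (norm2' m n (high_part m n B d (f P)))\<^sup>2 \<le> \<delta> \<and>
             (norm2' m n (high_part m n B d (f Q)))\<^sup>2 \<le> \<delta>)))"
  apply (intro exI[of _ "1::real"] conjI allI impI)
   apply simp
  subgoal premises prems for \<rho> \<delta> n m \<psi>
  proof -
    have \<rho>: "0 \<le> \<rho>" "\<rho> < 1" and \<delta>: "0 < \<delta>" "\<delta> < 1" and m: "0 < m"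
      using prems by simp_all
    have mg: "uniform_marginals m \<psi>"
      using prems unfolding nme_state_def uniform_marginals_def by blast
    have sb: "centered_corr_bound m \<psi> \<rho>"
      using centered_corr_bound_maxcorr[OF m, of \<psi>] prems by simp
    obtain g where g: "0 \<le> g" "g \<le> 1" and loss: "\<And>k. \<bar>g ^ (2 * k) - 1\<bar> * \<rho> ^ k \<le> \<delta>"
      and decay: "\<And>w. 2 * (ln (1 / \<delta>))\<^sup>2 / ((1 - \<rho>) * \<delta>) < real w \<Longrightarrow> g ^ (2 * w) \<le> \<delta>"
      using noise_rate_exists[OF \<rho> \<delta>] by blast
    show ?thesis
      unfolding Let_def mult_1
      using noise_linear_unital[OF m] between01_noise[OF m g] norm2'_noise_le[OF m g]
        corr_noise_diff_le[OF sb \<rho>(1) m mg loss] high_part_noise_between01[OF _ m g(1) \<delta>(1) _ decay]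
      by blast
  qed
  done

end
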